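(* Let $\gamma\in\mathcal{C}$ and let $\Omega$ be a direct split decomposition of $\gamma$. Then $\mathrm{rot}(\gamma)=\sum_{C\in\Omega}\mathrm{rot}(C)$.
   Context: A curve is a map $\gamma:[0,1]\to\mathbb{R}^2$ with $\gamma(0)=\gamma(1)$ (basepoint), regular and generic (finitely many self-intersections, each transverse double point); $\mathcal{C}$ is the set of such curves. $\mathrm{rot}(\gamma)$ is the Whitney index (winding number of $\gamma'$ about the origin). Direct split at self-intersection $v=\gamma(t)=\gamma(t^* )$, $t<t^*$: the closed curve $\gamma|_{[t,t^*]}$ based at $v$; complementary indirect split: $\gamma|_{[t^*,1]}$ followed by $\gamma|_{[0,t]}$, based at $\gamma(0)$ (both with the orientation of $\gamma$). A direct split decomposition of $\gamma$ is a sequence $\Omega=(\gamma_i)_{i=1}^k$ with $C_0=\gamma$, $\gamma_i$ a direct split of $C_{i-1}$, $C_i$ the complementary indirect split of $C_{i-1}$, and $\gamma_k=C_{k-1}$. *)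

theory Defs
  imports "HOL-Complex_Analysis.Winding_Numbers"
begin

definition piece_regular :: "(real \<Rightarrow> complex) \<Rightarrow> real \<Rightarrow> real \<Rightarrow> bool" where
  "piece_regular c a b \<longleftrightarrow> a < b \<and>
     (\<exists>D. continuous_on {a..b} D \<and>
        (\<forall>s\<in>{a..b}. (c has_vector_derivative D s) (at s within {a..b}) \<and> D s \<noteq> 0))"

definition pder :: "(real \<Rightarrow> complex) \<Rightarrow> real \<Rightarrow> real \<Rightarrow> real \<Rightarrow> complex" where
  "pder c a b s = vector_derivative c (at s within {a..b})"

definition valid_partition :: "(real \<Rightarrow> complex) \<Rightarrow> real list \<Rightarrow> bool" where
  "valid_partition c ps \<longleftrightarrow> 2 \<le> length ps \<and> hd ps = 0 \<and> last ps = 1 \<and>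
     sorted_wrt (<) ps \<and> (\<forall>i < length ps - 1. piece_regular c (ps!i) (ps!Suc i))"

text \<open>Total turning (in full turns) of a closed piecewise regular curve: the change of
  angle of the tangent along each piece (real part of the winding number of the derivative
  path about 0) plus the exterior angles (in (-pi,pi]) at the break points, the break point
  p_0 = 0 being compared with the incoming direction at p_n = 1.\<close>
definition turning :: "(real \<Rightarrow> complex) \<Rightarrow> real list \<Rightarrow> real" where
  "turning c ps =
     (let n = length ps - 1 in
      (\<Sum>i<n. Re (winding_number
                    (\<lambda>s. pder c (ps!i) (ps!Suc i) (ps!i + s * (ps!Suc i - ps!i))) 0))
    + (\<Sum>i<n. Arg (pder c (ps!i) (ps!Suc i) (ps!i) /
                    (if i = 0 then pder c (ps!(n-1)) (ps!n) (ps!n)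
                     else pder c (ps!(i-1)) (ps!i) (ps!i))) / (2 * pi)))"

text \<open>Rotation number (Whitney index); for a C^1 closed regular curve it is the winding
  number of the derivative about 0; for curves with corners the exterior angles are added.\<close>
definition rot :: "(real \<Rightarrow> complex) \<Rightarrow> real" where
  "rot c = turning c (SOME ps. valid_partition c ps)"

definition regular_closed :: "(real \<Rightarrow> complex) \<Rightarrow> bool" where
  "regular_closed \<gamma> \<longleftrightarrow> \<gamma> 0 = \<gamma> 1 \<and>
     (\<exists>D. continuous_on {0..1} D \<and>
        (\<forall>s\<in>{0..1}. (\<gamma> has_vector_derivative D s) (at s within {0..1}) \<and> D s \<noteq> 0) \<and>
        D 0 = D 1)"

definition generic :: "(real \<Rightarrow> complex) \<Rightarrow> bool" where
  "generic \<gamma> \<longleftrightarrow>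
     finite {\<gamma> t | t. t \<in> {0..<1} \<and> (\<exists>t'\<in>{0..<1}. t' \<noteq> t \<and> \<gamma> t' = \<gamma> t)} \<and>
     (\<forall>t1\<in>{0..<1}. \<forall>t2\<in>{0..<1}. \<forall>t3\<in>{0..<1}.
        \<gamma> t1 = \<gamma> t2 \<and> \<gamma> t2 = \<gamma> t3 \<longrightarrow> t1 = t2 \<or> t2 = t3 \<or> t1 = t3) \<and>
     (\<forall>t\<in>{0..<1}. \<forall>t'\<in>{0..<1}. t \<noteq> t' \<and> \<gamma> t = \<gamma> t' \<longrightarrow>
        Im (cnj (vector_derivative \<gamma> (at t within {0..1})) *
            vector_derivative \<gamma> (at t' within {0..1})) \<noteq> 0)"

definition curve_C :: "(real \<Rightarrow> complex) \<Rightarrow> bool" where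
  "curve_C \<gamma> \<longleftrightarrow> regular_closed \<gamma> \<and> generic \<gamma>"

definition self_int :: "(real \<Rightarrow> complex) \<Rightarrow> real \<Rightarrow> real \<Rightarrow> bool" where
  "self_int C t t' \<longleftrightarrow> 0 \<le> t \<and> t < t' \<and> t' \<le> 1 \<and> C t = C t' \<and> \<not> (t = 0 \<and> t' = 1)"

definition direct_split :: "(real \<Rightarrow> complex) \<Rightarrow> real \<Rightarrow> real \<Rightarrow> (real \<Rightarrow> complex)" where
  "direct_split C t t' = subpath t t' C"

definition indirect_split :: "(real \<Rightarrow> complex) \<Rightarrow> real \<Rightarrow> real \<Rightarrow> (real \<Rightarrow> complex)" where
  "indirect_split C t t' =
     (if t = 0 then subpath t' 1 C
      else if t' = 1 then subpath 0 t C
      else subpath 0 t C +++ subpath t' 1 C)"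

inductive dsd :: "(real \<Rightarrow> complex) \<Rightarrow> (real \<Rightarrow> complex) list \<Rightarrow> bool" where
  last: "dsd C [C]"
| step: "self_int C t t' \<Longrightarrow> dsd (indirect_split C t t') \<Omega> \<Longrightarrow>
           dsd C (direct_split C t t' # \<Omega>)"

end

theory Submission
  imports Defs "HOL-Complex_Analysis.Riemann_Mapping"
begin

text \<open>The turning of a piecewise regular closed curve is a cyclic sum over its pieces of the
  turning of the tangent along a piece plus the exterior angle at its start. Inserting a break
  point where the curve is \<open>C\<^sup>1\<close> changes nothing, so two partitions give the same sum (compare
  both with their union) and \<open>rot\<close> is well defined; a positive affine reparametrisation leaves
  every summand unchanged. After refining a partition of \<open>C\<close> through the self-intersection
  parameters \<open>t < t'\<close>, the pieces of \<open>C\<close> are those of the direct split followed cyclically by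
  those of the indirect split, and separating the two cyclic sums only exchanges the exterior
  angles at the double point. As \<open>C\<close> is \<open>C\<^sup>1\<close> there, the old angles vanish; the new ones are
  \<open>Arg z\<close> and \<open>Arg (1/z)\<close> for the quotient \<open>z\<close> of the two tangents, which is not real by
  transversality, so they cancel. The indirect split is again closed, piecewise regular, free
  of triple points, and \<open>C\<^sup>1\<close> with transverse tangents at its double points: a corner created
  by the cut is not a double point, as it would be a triple point of \<open>C\<close>. Hence induction along
  the decomposition applies.\<close>

section \<open>Chains of pieces\<close>

fun chain_sum :: "('a \<Rightarrow> 'a \<Rightarrow> real) \<Rightarrow> 'a list \<Rightarrow> real" where
  "chain_sum F (x # y # r) = F x y + chain_sum F (y # r)"
| "chain_sum F _ = 0"

definition cyclic_sum :: "('a \<Rightarrow> 'a \<Rightarrow> real) \<Rightarrow> 'a list \<Rightarrow> real" where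
  "cyclic_sum F L = F (last L) (hd L) + chain_sum F L"

lemma chain_sum_conv_sum: "chain_sum F L = (\<Sum>i<length L - 1. F (L!i) (L!Suc i))"
proof (induction F L rule: chain_sum.induct)
  case (1 F x y r)
  then show ?case by (simp add: sum.lessThan_Suc_shift del: sum.lessThan_Suc)
qed auto

lemma chain_sum_Cons: "chain_sum F (x # L) = (if L = [] then 0 else F x (hd L) + chain_sum F L)"
  by (cases L) auto

lemma chain_sum_append:
  "X \<noteq> [] \<Longrightarrow> Y \<noteq> [] \<Longrightarrow> chain_sum F (X @ Y) = chain_sum F X + F (last X) (hd Y) + chain_sum F Y"
proof (induction X rule: induct_list012)
  case (3 x y zs)
  then show ?case by simp
qed (auto simp: neq_Nil_conv)

lemma cyclic_sum_append:
  "X \<noteq> [] \<Longrightarrow> Y \<noteq> [] \<Longrightarrow> cyclic_sum F (X @ Y) = cyclic_sum F X + cyclic_sum F Y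
     + (F (last X) (hd Y) + F (last Y) (hd X) - F (last X) (hd X) - F (last Y) (hd Y))"
  by (simp add: cyclic_sum_def chain_sum_append)

lemma cyclic_sum_rotate: "cyclic_sum F (X @ Y) = cyclic_sum F (Y @ X)"
  by (cases "X = []"; cases "Y = []") (simp_all add: cyclic_sum_append)

lemma cyclic_sum_conv_sum:
  assumes "L \<noteq> []"
  shows "cyclic_sum F L = (\<Sum>i<length L. F (L ! (if i = 0 then length L - 1 else i - 1)) (L ! i))"
proof -
  obtain x L' where "L = x # L'" using assms by (cases L) auto
  then have "(\<Sum>i<length L. F (L ! (if i = 0 then length L - 1 else i - 1)) (L ! i))
      = F (L ! (length L - 1)) (L ! 0) + (\<Sum>i<length L - 1. F (L ! i) (L ! Suc i))"
    by (simp add: sum.lessThan_Suc_shift del: sum.lessThan_Suc)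
  then show ?thesis using assms by (simp add: cyclic_sum_def chain_sum_conv_sum last_conv_nth hd_conv_nth)
qed

lemma cyclic_sum_refine:
  assumes "\<And>X. F X P1 + F P1 P2 = F X P" and "\<And>Y. F P2 Y = F P Y"
  shows "cyclic_sum F (U @ P1 # P2 # V) = cyclic_sum F (U @ P # V)"
proof -
  have "cyclic_sum F (P1 # P2 # W) = cyclic_sum F (P # W)" for W
    using assms[of P2] assms[of "last W"] assms(2)[of P] assms(2)[of "hd W"]
    by (cases "W = []") (auto simp: cyclic_sum_def chain_sum_Cons)
  then show ?thesis
    by (metis append_Cons cyclic_sum_rotate)
qed

definition pieces :: "'a list \<Rightarrow> ('a \<times> 'a) list" where
  "pieces ps = zip ps (tl ps)"

lemma pieces_Cons_Cons [simp]: "pieces (a # b # r) = (a, b) # pieces (b # r)"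
  by (simp add: pieces_def)

lemma pieces_single [simp]: "pieces [a] = []" and pieces_Nil [simp]: "pieces [] = []"
  by (auto simp: pieces_def)

lemma length_pieces [simp]: "length (pieces ps) = length ps - 1"
  by (simp add: pieces_def)

lemma pieces_nth: "i < length ps - 1 \<Longrightarrow> pieces ps ! i = (ps!i, ps!Suc i)"
  by (simp add: pieces_def nth_tl)

lemma pieces_append: "pieces (xs @ y # zs) = pieces (xs @ [y]) @ pieces (y # zs)"
proof (induction xs rule: induct_list012)
  case (2 x) then show ?case by (cases zs) auto
next
  case (3 x1 x2 xs) then show ?case by simp
qed simp

lemma pieces_map: "pieces (map h ps) = map (map_prod h h) (pieces ps)"
  by (induction ps rule: induct_list012) auto

lemma pieces_ends:
  assumes "2 \<le> length zs"
  shows "pieces zs \<noteq> []" "fst (hd (pieces zs)) = hd zs" "snd (last (pieces zs)) = last zs"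
proof -
  obtain a b r where "zs = a # b # r" using assms by (cases zs; cases "tl zs") auto
  moreover have "snd (last (pieces (a # b # r))) = last (b # r)" for a b :: 'a and r
    by (induction r arbitrary: a b) auto
  ultimately show "pieces zs \<noteq> []" "fst (hd (pieces zs)) = hd zs" "snd (last (pieces zs)) = last zs"
    by auto
qed

lemma sorted_hd_last:
  fixes zs :: "real list"
  assumes "sorted_wrt (<) zs" "x \<in> set zs"
  shows "hd zs \<le> x" "x \<le> last zs"
  using assms
proof (induction zs)
  case (Cons z zs)
  { case 1 then show ?case by (auto simp: less_imp_le) }
  { case 2 then show ?case using Cons.IH(2) by (cases "zs = []") (auto intro: less_imp_le) }
qed simp_all

lemma pieces_bounds:
  fixes zs :: "real list"
  assumes "sorted_wrt (<) zs" "P \<in> set (pieces zs)"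
  shows "fst P < snd P" "hd zs \<le> fst P" "snd P \<le> last zs"
proof -
  obtain i where i: "i < length zs - 1" "P = (zs!i, zs!Suc i)"
    using assms(2) by (auto simp: in_set_conv_nth pieces_nth)
  show "fst P < snd P" using i sorted_wrt_nth_less[OF assms(1), of i "Suc i"] by auto
  have "zs!i \<in> set zs" "zs!Suc i \<in> set zs" using i by auto
  then show "hd zs \<le> fst P" "snd P \<le> last zs" using sorted_hd_last[OF assms(1)] i by auto
qed

lemma exists_piece_right:
  fixes ps :: "real list"
  assumes "sorted_wrt (<) ps" "ps \<noteq> []" "hd ps \<le> x" "x < last ps"
  shows "\<exists>P\<in>set (pieces ps). fst P \<le> x \<and> x < snd P"
  using assms
proof (induction ps)
  case (Cons p r)
  then obtain q r' where r: "r = q # r'" by (cases r) auto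
  show ?case
  proof (cases "x < q")
    case False
    then have "\<exists>P\<in>set (pieces r). fst P \<le> x \<and> x < snd P"
      using Cons.IH Cons.prems r by auto
    then show ?thesis using r by auto
  qed (use Cons.prems r in auto)
qed simp

lemma exists_piece_left:
  fixes ps :: "real list"
  assumes "sorted_wrt (<) ps" "ps \<noteq> []" "hd ps < x" "x \<le> last ps"
  shows "\<exists>P\<in>set (pieces ps). fst P < x \<and> x \<le> snd P"
  using assms
proof (induction ps)
  case (Cons p r)
  then obtain q r' where r: "r = q # r'" by (cases r) auto
  show ?case
  proof (cases "x \<le> q")
    case False
    then have "\<exists>P\<in>set (pieces r). fst P < x \<and> x \<le> snd P"
      using Cons.IH Cons.prems r by auto
    then show ?thesis using r by auto
  qed (use Cons.prems r in auto)
qed simp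

lemma sorted_split_around:
  fixes ps :: "real list"
  assumes "sorted_wrt (<) ps" "ps \<noteq> []" "hd ps < x" "x < last ps" "x \<notin> set ps"
  shows "\<exists>xs a b ys. ps = xs @ a # b # ys \<and> a < x \<and> x < b"
  using assms
proof (induction ps)
  case (Cons p r)
  then have rne: "r \<noteq> []" by auto
  show ?case
  proof (cases "x < hd r")
    case True
    then have "p # r = [] @ p # hd r # tl r" "p < x" using rne Cons.prems by auto
    then show ?thesis using True by blast
  next
    case False
    then have "hd r < x" using Cons.prems rne
      by (metis hd_in_set list.set_intros(2) not_less_iff_gr_or_eq)
    then obtain xs a b ys where "r = xs @ a # b # ys" "a < x" "x < b"
      using Cons.IH Cons.prems rne by auto
    then have "p # r = (p # xs) @ a # b # ys" "a < x" "x < b" by simp_all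
    then show ?thesis by blast
  qed
qed simp

lemma pieces_wrap_ends:
  assumes xs: "xs = [] \<longleftrightarrow> t = 0" and ys: "ys = [] \<longleftrightarrow> t' = 1" and nt: "\<not> (t = 0 \<and> t' = 1)"
    and h: "hd (xs @ [t]) = 0" and l: "last (t' # ys) = 1"
  defines "M \<equiv> pieces (t' # ys) @ pieces (xs @ [t])"
  shows "M \<noteq> []" "snd (last M) = (if t = 0 then 1 else t)" "fst (hd M) = (if t' = 1 then 0 else t')"
proof -
  have "pieces (xs @ [t]) = [] \<longleftrightarrow> t = 0"
    and "t \<noteq> 0 \<Longrightarrow> snd (last (pieces (xs @ [t]))) = t" "t \<noteq> 0 \<Longrightarrow> fst (hd (pieces (xs @ [t]))) = 0"
    using pieces_ends[of "xs @ [t]"] xs h by (cases xs; auto)+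
  moreover have "pieces (t' # ys) = [] \<longleftrightarrow> t' = 1"
    and "t' \<noteq> 1 \<Longrightarrow> snd (last (pieces (t' # ys))) = 1" "t' \<noteq> 1 \<Longrightarrow> fst (hd (pieces (t' # ys))) = t'"
    using pieces_ends[of "t' # ys"] ys l by (cases ys; auto)+
  ultimately show "M \<noteq> []" "snd (last M) = (if t = 0 then 1 else t)"
    "fst (hd M) = (if t' = 1 then 0 else t')"
    using nt unfolding M_def by auto
qed

section \<open>Regular pieces and their turning\<close>

definition right_deriv :: "(real \<Rightarrow> complex) \<Rightarrow> real \<Rightarrow> complex" where
  "right_deriv c x = vector_derivative c (at_right x)"

definition left_deriv :: "(real \<Rightarrow> complex) \<Rightarrow> real \<Rightarrow> complex" where
  "left_deriv c x = vector_derivative c (at_left x)"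

lemma right_deriv_eqI: "(c has_vector_derivative D) (at_right x) \<Longrightarrow> right_deriv c x = D"
  unfolding right_deriv_def
  using vector_derivative_within_cbox[of x "x + 1" x c D] by (simp add: at_within_Icc_at_right)

lemma left_deriv_eqI: "(c has_vector_derivative D) (at_left x) \<Longrightarrow> left_deriv c x = D"
  unfolding left_deriv_def
  using vector_derivative_within_cbox[of "x - 1" x x c D] by (simp add: at_within_Icc_at_left)

lemma right_deriv_within_Icc:
  assumes "(c has_vector_derivative D) (at x within {a..b})" "a \<le> x" "x < b"
  shows "right_deriv c x = D"
proof -
  have "(c has_vector_derivative D) (at x within {x..b})"
    using has_vector_derivative_within_subset[OF assms(1)] assms(2) by auto
  then show ?thesis using assms(3) by (intro right_deriv_eqI) (simp add: at_within_Icc_at_right)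
qed

lemma left_deriv_within_Icc:
  assumes "(c has_vector_derivative D) (at x within {a..b})" "a < x" "x \<le> b"
  shows "left_deriv c x = D"
proof -
  have "(c has_vector_derivative D) (at x within {a..x})"
    using has_vector_derivative_within_subset[OF assms(1)] assms(3) by auto
  then show ?thesis using assms(2) by (intro left_deriv_eqI) (simp add: at_within_Icc_at_left)
qed

lemma pder_eq_right_deriv: "a < b \<Longrightarrow> pder c a b a = right_deriv c a"
  by (simp add: pder_def right_deriv_def at_within_Icc_at_right)

lemma pder_eq_left_deriv: "a < b \<Longrightarrow> pder c a b b = left_deriv c b"
  by (simp add: pder_def left_deriv_def at_within_Icc_at_left)

lemma piece_regularE:
  assumes "piece_regular c a b"
  obtains D where "a < b" "continuous_on {a..b} D"
    "\<And>s. s \<in> {a..b} \<Longrightarrow> (c has_vector_derivative D s) (at s within {a..b})"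
    "\<And>s. s \<in> {a..b} \<Longrightarrow> D s \<noteq> 0"
    "\<And>s. s \<in> {a..b} \<Longrightarrow> pder c a b s = D s"
proof -
  from assms obtain D where ab: "a < b" and D: "continuous_on {a..b} D"
    "\<forall>s\<in>{a..b}. (c has_vector_derivative D s) (at s within {a..b}) \<and> D s \<noteq> 0"
    unfolding piece_regular_def by blast
  have "pder c a b s = D s" if "s \<in> {a..b}" for s
    using vector_derivative_within_cbox[of a b s c "D s"] D that ab by (simp add: pder_def)
  then show ?thesis using that ab D by blast
qed

lemma affine_mem_Icc:
  fixes a b s :: real
  assumes "a \<le> b" "0 \<le> s" "s \<le> 1"
  shows "a + s * (b - a) \<in> {a..b}"
proof -
  have "s * (b - a) \<le> 1 * (b - a)" using assms by (intro mult_right_mono) auto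
  moreover have "0 \<le> s * (b - a)" using assms by simp
  ultimately show ?thesis by simp
qed

lemma piece_regular_tangent_path:
  assumes "piece_regular c a b"
  shows "path (\<lambda>s. pder c a b (a + s * (b - a)))"
    "0 \<notin> path_image (\<lambda>s. pder c a b (a + s * (b - a)))"
proof -
  obtain D where D: "a < b" "continuous_on {a..b} D"
    "\<And>s. s \<in> {a..b} \<Longrightarrow> D s \<noteq> 0" "\<And>s. s \<in> {a..b} \<Longrightarrow> pder c a b s = D s"
    using piece_regularE[OF assms] by metis
  have m: "a + s * (b - a) \<in> {a..b}" if "s \<in> {0..1}" for s
    using that D(1) by (intro affine_mem_Icc) auto
  have "path (\<lambda>s. D (a + s * (b - a)))"
    unfolding path_def
    by (rule continuous_on_compose2[OF D(2)]) (auto intro!: continuous_intros m)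
  then show "path (\<lambda>s. pder c a b (a + s * (b - a)))"
    unfolding path_def by (rule continuous_on_eq) (use D(4) m in auto)
  show "0 \<notin> path_image (\<lambda>s. pder c a b (a + s * (b - a)))"
    unfolding path_image_def using D(3,4) m by force
qed

lemma piece_regular_subinterval:
  assumes "piece_regular c a b" "a \<le> a'" "a' < b'" "b' \<le> b"
  shows "piece_regular c a' b'" "\<And>s. s \<in> {a'..b'} \<Longrightarrow> pder c a' b' s = pder c a b s"
proof -
  obtain D where D: "continuous_on {a..b} D"
    "\<And>s. s \<in> {a..b} \<Longrightarrow> (c has_vector_derivative D s) (at s within {a..b})"
    "\<And>s. s \<in> {a..b} \<Longrightarrow> D s \<noteq> 0" "\<And>s. s \<in> {a..b} \<Longrightarrow> pder c a b s = D s"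
    using piece_regularE[OF assms(1)] by metis
  have sub: "{a'..b'} \<subseteq> {a..b}" using assms by auto
  have d: "(c has_vector_derivative D s) (at s within {a'..b'})" if "s \<in> {a'..b'}" for s
    using has_vector_derivative_within_subset[OF D(2) sub] that sub by blast
  show "piece_regular c a' b'" unfolding piece_regular_def
    using assms(3) continuous_on_subset[OF D(1) sub] d D(3) sub by blast
  fix s assume s: "s \<in> {a'..b'}"
  then show "pder c a' b' s = pder c a b s"
    using vector_derivative_within_cbox[of a' b' s c "D s"] d[OF s] assms(3) D(4) sub
    by (auto simp: pder_def)
qed

definition piece_winding :: "(real \<Rightarrow> complex) \<Rightarrow> real \<Rightarrow> real \<Rightarrow> real" where
  "piece_winding c a b = Re (winding_number (\<lambda>s. pder c a b (a + s * (b - a))) 0)"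

lemma piece_winding_split:
  assumes pr: "piece_regular c a b" and m: "a < m" "m < b"
  shows "piece_winding c a b = piece_winding c a m + piece_winding c m b"
proof -
  define g where "g = (\<lambda>s. pder c a b (a + s * (b - a)))"
  have ab: "a < b" using m by simp
  note P = piece_regular_tangent_path[OF pr, folded g_def]
  define u where "u = (m - a) / (b - a)"
  have u: "0 \<le> u" "u \<le> 1" using m by (auto simp: u_def)
  have "winding_number (subpath 0 u g) 0 + winding_number (subpath u 1 g) 0
      = winding_number (subpath 0 1 g) 0"
    using winding_number_subpath_combine[OF P, of 0 u 1] u by simp
  moreover have "subpath 0 1 g = g" by (simp add: subpath_def)
  moreover have "winding_number (subpath 0 u g) 0 = winding_number (\<lambda>s. pder c a m (a + s * (m - a))) 0"
  proof (rule winding_number_cong)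
    fix s :: real assume s: "0 \<le> s" "s \<le> 1"
    have e: "a + ((u - 0) * s + 0) * (b - a) = a + s * (m - a)"
      using ab by (simp add: u_def field_simps)
    have "a + s * (m - a) \<in> {a..m}" using s m by (intro affine_mem_Icc) auto
    then show "subpath 0 u g s = pder c a m (a + s * (m - a))"
      unfolding subpath_def g_def e using piece_regular_subinterval(2)[OF pr _ m(1)] m by simp
  qed
  moreover have "winding_number (subpath u 1 g) 0 = winding_number (\<lambda>s. pder c m b (m + s * (b - m))) 0"
  proof (rule winding_number_cong)
    fix s :: real assume s: "0 \<le> s" "s \<le> 1"
    have u1: "u * (b - a) = m - a" using ab by (simp add: u_def)
    have "a + ((1 - u) * s + u) * (b - a) = a + s * (b - a) - s * (u * (b - a)) + u * (b - a)"
      by (simp add: algebra_simps)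
    then have e: "a + ((1 - u) * s + u) * (b - a) = m + s * (b - m)"
      unfolding u1 by (simp add: algebra_simps)
    have "m + s * (b - m) \<in> {m..b}" using s m by (intro affine_mem_Icc) auto
    then show "subpath u 1 g s = pder c m b (m + s * (b - m))"
      unfolding subpath_def g_def e using piece_regular_subinterval(2)[OF pr _ m(2)] m by simp
  qed
  ultimately show ?thesis unfolding piece_winding_def g_def
    by (metis plus_complex.sel(1))
qed

definition piece_turn :: "(real \<Rightarrow> complex) \<Rightarrow> real \<times> real \<Rightarrow> real \<times> real \<Rightarrow> real" where
  "piece_turn c P Q = piece_winding c (fst Q) (snd Q)
     + Arg (right_deriv c (fst Q) / left_deriv c (snd P)) / (2 * pi)"

definition regular_chain :: "(real \<Rightarrow> complex) \<Rightarrow> real list \<Rightarrow> bool" where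
  "regular_chain c zs \<longleftrightarrow> sorted_wrt (<) zs \<and> (\<forall>P\<in>set (pieces zs). piece_regular c (fst P) (snd P))"

lemma valid_partition_iff_regular_chain:
  "valid_partition c ps \<longleftrightarrow> 2 \<le> length ps \<and> hd ps = 0 \<and> last ps = 1 \<and> regular_chain c ps"
proof -
  have "(\<forall>i < length ps - 1. piece_regular c (ps!i) (ps!Suc i)) \<longleftrightarrow>
        (\<forall>P\<in>set (pieces ps). piece_regular c (fst P) (snd P))"
  proof
    assume "\<forall>i < length ps - 1. piece_regular c (ps!i) (ps!Suc i)"
    then show "\<forall>P\<in>set (pieces ps). piece_regular c (fst P) (snd P)"
      by (auto simp: in_set_conv_nth pieces_nth)
  next
    assume h: "\<forall>P\<in>set (pieces ps). piece_regular c (fst P) (snd P)"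
    show "\<forall>i < length ps - 1. piece_regular c (ps!i) (ps!Suc i)"
    proof (intro allI impI)
      fix i assume i: "i < length ps - 1"
      then have "pieces ps ! i \<in> set (pieces ps)" by (intro nth_mem) simp
      then show "piece_regular c (ps!i) (ps!Suc i)" using h i by (auto simp: pieces_nth)
    qed
  qed
  then show ?thesis unfolding valid_partition_def regular_chain_def by blast
qed

lemma regular_chain_append:
  "regular_chain c (xs @ t # ys) \<longleftrightarrow> regular_chain c (xs @ [t]) \<and> regular_chain c (t # ys)"
proof -
  have "sorted_wrt (<) (xs @ t # ys) \<longleftrightarrow> sorted_wrt (<) (xs @ [t]) \<and> sorted_wrt (<) (t # ys)"
    by (auto simp: sorted_wrt_append intro: less_trans)
  then show ?thesis unfolding regular_chain_def pieces_append[of xs t ys] by auto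
qed

lemma turning_eq_cyclic_sum:
  assumes "sorted_wrt (<) ps" "2 \<le> length ps"
  shows "turning c ps = cyclic_sum (piece_turn c) (pieces ps)"
proof -
  define n where "n = length ps - 1"
  have n: "0 < n" "pieces ps \<noteq> []" "length (pieces ps) = n"
    using assms(2) by (auto simp: n_def simp flip: length_greater_0_conv)
  have lt: "ps!i < ps!Suc i" if "i < n" for i
    using sorted_wrt_nth_less[OF assms(1)] that n_def by auto
  have "cyclic_sum (piece_turn c) (pieces ps)
      = (\<Sum>i<n. piece_turn c (pieces ps ! (if i = 0 then n - 1 else i - 1)) (pieces ps ! i))"
    using cyclic_sum_conv_sum[OF n(2), of "piece_turn c"] by (simp only: n(3))
  also have "\<dots> = (\<Sum>i<n. piece_winding c (ps!i) (ps!Suc i)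
      + Arg (pder c (ps!i) (ps!Suc i) (ps!i) / (if i = 0 then pder c (ps!(n-1)) (ps!n) (ps!n)
          else pder c (ps!(i-1)) (ps!i) (ps!i))) / (2 * pi))"
  proof (rule sum.cong[OF refl])
    fix i assume "i \<in> {..<n}"
    then have i: "i < n" by simp
    have "Suc (n - 1) = n" "n - 1 < length ps - 1" using n(1) by (simp_all add: n_def)
    then have last_piece: "pieces ps ! (n - 1) = (ps!(n-1), ps!n)" "ps!(n-1) < ps!n"
      using pieces_nth[of "n - 1" ps] lt[of "n - 1"] n(1) by simp_all
    have "i \<noteq> 0 \<Longrightarrow> pieces ps ! (i - 1) = (ps!(i-1), ps!i)" "i \<noteq> 0 \<Longrightarrow> ps!(i-1) < ps!i"
      using pieces_nth[of "i - 1" ps] lt[of "i - 1"] i by (simp_all add: n_def)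
    moreover have "pieces ps ! i = (ps!i, ps!Suc i)" using pieces_nth[of i ps] i by (simp add: n_def)
    ultimately show "piece_turn c (pieces ps ! (if i = 0 then n - 1 else i - 1)) (pieces ps ! i)
      = piece_winding c (ps!i) (ps!Suc i)
        + Arg (pder c (ps!i) (ps!Suc i) (ps!i) / (if i = 0 then pder c (ps!(n-1)) (ps!n) (ps!n)
            else pder c (ps!(i-1)) (ps!i) (ps!i))) / (2 * pi)"
      using last_piece lt[OF i]
      by (cases "i = 0") (simp_all add: piece_turn_def pder_eq_right_deriv pder_eq_left_deriv)
  qed
  also have "\<dots> = turning c ps"
    unfolding turning_def Let_def n_def[symmetric] piece_winding_def sum.distrib ..
  finally show ?thesis ..
qed

lemma valid_partition_has_right_deriv:
  assumes "valid_partition C ps" "0 \<le> x" "x < 1"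
  shows "\<exists>D. (C has_vector_derivative D) (at_right x)"
proof -
  have V: "sorted_wrt (<) ps" "ps \<noteq> []" "hd ps = 0" "last ps = 1"
     "\<forall>P\<in>set (pieces ps). piece_regular C (fst P) (snd P)"
    using assms(1) unfolding valid_partition_iff_regular_chain regular_chain_def by auto
  have "\<exists>P\<in>set (pieces ps). fst P \<le> x \<and> x < snd P"
    using exists_piece_right[OF V(1,2)] V(3,4) assms(2,3) by simp
  then obtain P where P: "P \<in> set (pieces ps)" "fst P \<le> x" "x < snd P" by blast
  obtain D where D: "\<And>s. s \<in> {fst P..snd P} \<Longrightarrow>
      (C has_vector_derivative D s) (at s within {fst P..snd P})"
    using piece_regularE[OF V(5)[rule_format, OF P(1)]] by metis
  have "(C has_vector_derivative D x) (at x within {x..snd P})"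
    using has_vector_derivative_within_subset[OF D[of x]] P by auto
  then show ?thesis using P by (auto simp: at_within_Icc_at_right)
qed

lemma valid_partition_has_left_deriv:
  assumes "valid_partition C ps" "0 < x" "x \<le> 1"
  shows "\<exists>D. (C has_vector_derivative D) (at_left x)"
proof -
  have V: "sorted_wrt (<) ps" "ps \<noteq> []" "hd ps = 0" "last ps = 1"
     "\<forall>P\<in>set (pieces ps). piece_regular C (fst P) (snd P)"
    using assms(1) unfolding valid_partition_iff_regular_chain regular_chain_def by auto
  have "\<exists>P\<in>set (pieces ps). fst P < x \<and> x \<le> snd P"
    using exists_piece_left[OF V(1,2)] V(3,4) assms(2,3) by simp
  then obtain P where P: "P \<in> set (pieces ps)" "fst P < x" "x \<le> snd P" by blast
  obtain D where D: "\<And>s. s \<in> {fst P..snd P} \<Longrightarrow>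
      (C has_vector_derivative D s) (at s within {fst P..snd P})"
    using piece_regularE[OF V(5)[rule_format, OF P(1)]] by metis
  have "(C has_vector_derivative D x) (at x within {fst P..x})"
    using has_vector_derivative_within_subset[OF D[of x]] P by auto
  then show ?thesis using P by (auto simp: at_within_Icc_at_left)
qed

section \<open>Independence of the partition\<close>

lemma valid_partition_insert:
  assumes v: "valid_partition c (xs @ a # b # ys)" and m: "a < m" "m < b"
  shows "valid_partition c (xs @ a # m # b # ys)"
    "turning c (xs @ a # m # b # ys) = turning c (xs @ a # b # ys)"
proof -
  have pp: "pieces (xs @ a # b # ys) = pieces (xs @ [a]) @ (a, b) # pieces (b # ys)"
    using pieces_append[of xs a "b # ys"] by simp
  have pq: "pieces (xs @ a # m # b # ys) = pieces (xs @ [a]) @ (a, m) # (m, b) # pieces (b # ys)"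
    using pieces_append[of xs a "m # b # ys"] by simp
  have V: "2 \<le> length (xs @ a # b # ys)" "hd (xs @ a # b # ys) = 0" "last (xs @ a # b # ys) = 1"
     "sorted_wrt (<) (xs @ a # b # ys)"
     "\<forall>P\<in>set (pieces (xs @ a # b # ys)). piece_regular c (fst P) (snd P)"
    using v unfolding valid_partition_iff_regular_chain regular_chain_def by auto
  have prab: "piece_regular c a b" using V(5) pp by auto
  have pram: "piece_regular c a m" "piece_regular c m b"
    using piece_regular_subinterval(1)[OF prab] m by auto
  have srt: "sorted_wrt (<) (xs @ a # m # b # ys)"
    using V(4) m by (auto simp: sorted_wrt_append)
  have "hd (xs @ a # m # b # ys) = 0" using V(2) by (cases xs) auto
  then show "valid_partition c (xs @ a # m # b # ys)"
    unfolding valid_partition_iff_regular_chain regular_chain_def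
    using V(3,5) srt pram by (auto simp: pq pp)
  obtain D where D: "\<And>s. s \<in> {a..b} \<Longrightarrow> (c has_vector_derivative D s) (at s within {a..b})"
    "\<And>s. s \<in> {a..b} \<Longrightarrow> D s \<noteq> 0"
    using piece_regularE[OF prab] by metis
  have "right_deriv c m = D m" "left_deriv c m = D m"
    using right_deriv_within_Icc[OF D(1)] left_deriv_within_Icc[OF D(1)] m by auto
  then have no_corner: "Arg (right_deriv c m / left_deriv c m) = 0" using D(2) m by simp
  have "cyclic_sum (piece_turn c) (pieces (xs @ [a]) @ (a, m) # (m, b) # pieces (b # ys))
      = cyclic_sum (piece_turn c) (pieces (xs @ [a]) @ (a, b) # pieces (b # ys))"
    by (rule cyclic_sum_refine)
      (auto simp: piece_turn_def piece_winding_split[OF prab m] no_corner)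
  then show "turning c (xs @ a # m # b # ys) = turning c (xs @ a # b # ys)"
    using turning_eq_cyclic_sum[OF srt] turning_eq_cyclic_sum[OF V(4)] by (simp add: pp pq)
qed

lemma valid_partition_set:
  assumes "valid_partition c ps"
  shows "set ps \<subseteq> {0..1}" "0 \<in> set ps" "1 \<in> set ps"
proof -
  have V: "2 \<le> length ps" "hd ps = 0" "last ps = 1" "sorted_wrt (<) ps"
    using assms unfolding valid_partition_def by auto
  then have ne: "ps \<noteq> []" by auto
  show "0 \<in> set ps" "1 \<in> set ps" using V ne by (metis hd_in_set, metis last_in_set)
  show "set ps \<subseteq> {0..1}" using sorted_hd_last[OF V(4)] V(2,3) by auto
qed

lemma valid_partition_refine:
  assumes v: "valid_partition c ps" and S: "finite S" "S \<subseteq> {0<..<1}"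
  shows "\<exists>qs. valid_partition c qs \<and> set qs = set ps \<union> S \<and> turning c qs = turning c ps"
  using S
proof (induction S rule: finite_induct)
  case empty then show ?case using v by auto
next
  case (insert x S)
  then obtain qs where qs: "valid_partition c qs" "set qs = set ps \<union> S" "turning c qs = turning c ps"
    by auto
  show ?case
  proof (cases "x \<in> set qs")
    case True then show ?thesis using qs by auto
  next
    case False
    have V: "2 \<le> length qs" "hd qs = 0" "last qs = 1" "sorted_wrt (<) qs"
      using qs(1) unfolding valid_partition_def by auto
    have x: "0 < x" "x < 1" using insert by auto
    obtain xs a b ys where sp: "qs = xs @ a # b # ys" "a < x" "x < b"
      using sorted_split_around[OF V(4) _ _ _ False] V x by fastforce
    have "valid_partition c (xs @ a # x # b # ys)" "turning c (xs @ a # x # b # ys) = turning c qs"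
      using valid_partition_insert[of c xs a b ys x] qs(1) sp by auto
    moreover have "set (xs @ a # x # b # ys) = set ps \<union> insert x S" using qs(2) sp(1) by auto
    ultimately show ?thesis using qs(3) by metis
  qed
qed

lemma turning_partition_independent:
  assumes "valid_partition c ps" "valid_partition c ps'"
  shows "turning c ps = turning c ps'"
proof -
  obtain qs where q: "valid_partition c qs" "set qs = set ps \<union> (set ps' \<inter> {0<..<1})"
      "turning c qs = turning c ps"
    using valid_partition_refine[OF assms(1), of "set ps' \<inter> {0<..<1}"] by auto
  obtain qs' where q': "valid_partition c qs'" "set qs' = set ps' \<union> (set ps \<inter> {0<..<1})"
      "turning c qs' = turning c ps'"
    using valid_partition_refine[OF assms(2), of "set ps \<inter> {0<..<1}"] by auto
  have "set qs = set ps \<union> set ps'" "set qs' = set ps \<union> set ps'"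
    using q(2) q'(2) valid_partition_set[OF assms(1)] valid_partition_set[OF assms(2)]
    by (auto simp: subset_iff less_le)
  then have "qs = qs'"
    using q(1) q'(1) unfolding valid_partition_def strict_sorted_iff
    by (metis sorted_distinct_set_unique)
  then show ?thesis using q(3) q'(3) by simp
qed

lemma rot_eq_cyclic_sum:
  assumes "valid_partition c ps"
  shows "rot c = cyclic_sum (piece_turn c) (pieces ps)"
proof -
  have "rot c = turning c ps"
    unfolding rot_def using assms by (metis someI turning_partition_independent)
  also have "\<dots> = cyclic_sum (piece_turn c) (pieces ps)"
    using assms by (intro turning_eq_cyclic_sum) (auto simp: valid_partition_def)
  finally show ?thesis .
qed

section \<open>Affine reparametrisation of pieces\<close>

lemma winding_number_scale_pos:
  assumes g: "path g" "0 \<notin> path_image g" and r: "0 < r"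
  shows "winding_number (\<lambda>s. complex_of_real r * g s) 0 = winding_number g 0"
proof -
  obtain q where q: "path q" "pathfinish q - pathstart q = 2 * of_real pi * \<i> * winding_number g 0"
      "\<And>t. t \<in> {0..1} \<Longrightarrow> g t = 0 + exp (q t)"
    using winding_number_as_continuous_log[OF g] by metis
  define q' where "q' t = q t + complex_of_real (ln r)" for t
  have pq': "path q'"
    unfolding q'_def using q(1) unfolding path_def by (intro continuous_intros) auto
  have "winding_number (\<lambda>s. complex_of_real r * g s) 0 = winding_number (exp \<circ> q') 0"
  proof (rule winding_number_cong)
    fix t :: real assume "0 \<le> t" "t \<le> 1"
    then have "g t = exp (q t)" using q(3) by auto
    then show "complex_of_real r * g t = (exp \<circ> q') t"
      using r by (simp add: q'_def exp_add exp_of_real mult.commute)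
  qed
  also have "\<dots> = (pathfinish q' - pathstart q') / (2 * of_real pi * \<i>)"
    by (rule winding_number_compose_exp[OF pq'])
  also have "\<dots> = winding_number g 0"
    using q(2) by (simp add: q'_def pathfinish_def pathstart_def)
  finally show ?thesis .
qed

lemma has_vector_derivative_affine_reparam:
  assumes ab: "a' < b'" and bp: "0 < \<beta>" and fc: "\<forall>y\<in>{a'..b'}. f y = c (a + \<beta> * (y - a'))"
    and y: "y \<in> {a'..b'}"
    and D: "(c has_vector_derivative D) (at (a + \<beta> * (y - a')) within {a..a + \<beta> * (b' - a')})"
  shows "(f has_vector_derivative (\<beta> *\<^sub>R D)) (at y within {a'..b'})"
proof -
  define g where "g y = \<beta> * y + (a - \<beta> * a')" for y
  have geq: "g y = a + \<beta> * (y - a')" for y by (simp add: g_def algebra_simps)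
  have gd: "(g has_vector_derivative \<beta>) (at y within {a'..b'})"
    unfolding g_def has_real_derivative_iff_has_vector_derivative[symmetric]
    by (auto intro!: derivative_eq_intros)
  have img: "g ` {a'..b'} = {a..a + \<beta> * (b' - a')}"
  proof -
    have e: "\<beta> * a' + (a - \<beta> * a') = a" "\<beta> * b' + (a - \<beta> * a') = a + \<beta> * (b' - a')"
      by (simp_all add: right_diff_distrib)
    have ne: "{a'..b'} \<noteq> {}" using ab by simp
    show ?thesis unfolding g_def image_affinity_atLeastAtMost using ne bp
      by (simp only: e if_False if_True less_imp_le)
  qed
  have "((c \<circ> g) has_vector_derivative (\<beta> *\<^sub>R D)) (at y within {a'..b'})"
    by (rule vector_diff_chain_within[OF gd]) (use D in \<open>unfold img, simp add: geq\<close>)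
  then show ?thesis
  proof (rule has_vector_derivative_transform[OF y, rotated])
    fix x assume "x \<in> {a'..b'}"
    then show "f x = (c \<circ> g) x" using fc by (simp add: geq)
  qed
qed

definition affine_reparam ::
    "(real \<Rightarrow> complex) \<Rightarrow> (real \<Rightarrow> complex) \<Rightarrow> real \<Rightarrow> real \<Rightarrow> real \<Rightarrow> real \<Rightarrow> bool" where
  "affine_reparam f c a' b' a b \<longleftrightarrow> a' < b' \<and> a < b \<and>
     (\<forall>y\<in>{a'..b'}. f y = c (a + ((b - a) / (b' - a')) * (y - a')))"

lemma affine_reparam_piece:
  assumes co: "affine_reparam f c a' b' a b" and pr: "piece_regular c a b"
  defines "\<beta> \<equiv> (b - a) / (b' - a')"
  shows "piece_regular f a' b'" "piece_winding f a' b' = piece_winding c a b"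
    "right_deriv f a' = complex_of_real \<beta> * right_deriv c a"
    "left_deriv f b' = complex_of_real \<beta> * left_deriv c b"
proof -
  have ab': "a' < b'" and ab: "a < b" and fc: "\<forall>y\<in>{a'..b'}. f y = c (a + \<beta> * (y - a'))"
    using co by (auto simp: affine_reparam_def \<beta>_def)
  have bp: "0 < \<beta>" using ab ab' by (simp add: \<beta>_def)
  have bb: "a + \<beta> * (b' - a') = b" using ab' by (simp add: \<beta>_def)
  obtain D where D: "continuous_on {a..b} D"
    "\<And>s. s \<in> {a..b} \<Longrightarrow> (c has_vector_derivative D s) (at s within {a..b})"
    "\<And>s. s \<in> {a..b} \<Longrightarrow> D s \<noteq> 0" "\<And>s. s \<in> {a..b} \<Longrightarrow> pder c a b s = D s"
    using piece_regularE[OF pr] by metis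
  have gin: "a + \<beta> * (y - a') \<in> {a..b}" if "y \<in> {a'..b'}" for y
  proof -
    have "\<beta> * (y - a') \<le> \<beta> * (b' - a')" using that bp by (intro mult_left_mono) auto
    then show ?thesis using that bp bb by auto
  qed
  have fd: "(f has_vector_derivative (\<beta> *\<^sub>R D (a + \<beta> * (y - a')))) (at y within {a'..b'})"
    if "y \<in> {a'..b'}" for y
    using has_vector_derivative_affine_reparam[OF ab' bp fc that] D(2)[OF gin[OF that]] bb by simp
  show "piece_regular f a' b'"
    unfolding piece_regular_def
  proof (intro conjI exI[of _ "\<lambda>y. \<beta> *\<^sub>R D (a + \<beta> * (y - a'))"] ballI)
    show "continuous_on {a'..b'} (\<lambda>y. \<beta> *\<^sub>R D (a + \<beta> * (y - a')))"
      by (intro continuous_intros continuous_on_compose2[OF D(1)]) (auto intro: gin)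
    fix s assume s: "s \<in> {a'..b'}"
    show "(f has_vector_derivative \<beta> *\<^sub>R D (a + \<beta> * (s - a'))) (at s within {a'..b'})"
      by (rule fd[OF s])
    show "\<beta> *\<^sub>R D (a + \<beta> * (s - a')) \<noteq> 0" using D(3)[OF gin[OF s]] bp by simp
  qed (rule ab')
  have pf: "pder f a' b' y = complex_of_real \<beta> * pder c a b (a + \<beta> * (y - a'))"
    if "y \<in> {a'..b'}" for y
    using vector_derivative_within_cbox[of a' b' y f] fd[OF that] ab' that D(4)[OF gin[OF that]]
    by (simp add: pder_def scaleR_conv_of_real)
  show "right_deriv f a' = complex_of_real \<beta> * right_deriv c a"
    using pf[of a'] ab' ab by (simp add: pder_eq_right_deriv)
  show "left_deriv f b' = complex_of_real \<beta> * left_deriv c b"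
    using pf[of b'] ab' ab bb by (simp add: pder_eq_left_deriv)
  have "winding_number (\<lambda>s. pder f a' b' (a' + s * (b' - a'))) 0
      = winding_number (\<lambda>s. complex_of_real \<beta> * pder c a b (a + s * (b - a))) 0"
  proof (rule winding_number_cong)
    fix s :: real assume s: "0 \<le> s" "s \<le> 1"
    have "a' + s * (b' - a') \<in> {a'..b'}" using s ab' by (intro affine_mem_Icc) auto
    moreover have "a + \<beta> * (a' + s * (b' - a') - a') = a + s * (b - a)"
      using ab' by (simp add: \<beta>_def field_simps)
    ultimately show "pder f a' b' (a' + s * (b' - a')) = complex_of_real \<beta> * pder c a b (a + s * (b - a))"
      using pf by metis
  qed
  also have "\<dots> = winding_number (\<lambda>s. pder c a b (a + s * (b - a))) 0"
    using winding_number_scale_pos[OF piece_regular_tangent_path[OF pr] bp] .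
  finally show "piece_winding f a' b' = piece_winding c a b" by (simp add: piece_winding_def)
qed

lemma piece_turn_affine_reparam:
  assumes "affine_reparam f c (fst P') (snd P') (fst P) (snd P)" "piece_regular c (fst P) (snd P)"
    "affine_reparam f c (fst Q') (snd Q') (fst Q) (snd Q)" "piece_regular c (fst Q) (snd Q)"
  shows "piece_turn f P' Q' = piece_turn c P Q"
proof -
  note p = affine_reparam_piece[OF assms(1,2)] and q = affine_reparam_piece[OF assms(3,4)]
  define r1 where "r1 = (snd Q - fst Q) / (snd Q' - fst Q')"
  define r2 where "r2 = (snd P - fst P) / (snd P' - fst P')"
  have r0: "0 < r1" "0 < r2" using assms(1,3) by (auto simp: affine_reparam_def r1_def r2_def)
  have "right_deriv f (fst Q') / left_deriv f (snd P')
      = complex_of_real (r1 / r2) * (right_deriv c (fst Q) / left_deriv c (snd P))"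
    using p(4) q(3) r0 by (simp add: r1_def[symmetric] r2_def[symmetric])
  then have "Arg (right_deriv f (fst Q') / left_deriv f (snd P'))
      = Arg (right_deriv c (fst Q) / left_deriv c (snd P))"
    using r0 Arg_times_of_real[of "r1/r2" "right_deriv c (fst Q) / left_deriv c (snd P)"]
    by (simp add: field_simps)
  then show ?thesis using q(2) by (simp add: piece_turn_def)
qed

lemma cyclic_sum_affine_reparam:
  assumes "list_all2 (\<lambda>P' P. affine_reparam f c (fst P') (snd P') (fst P) (snd P)
      \<and> piece_regular c (fst P) (snd P)) L' L"
    and "L \<noteq> []"
  shows "cyclic_sum (piece_turn f) L' = cyclic_sum (piece_turn c) L"
proof -
  have len: "length L' = length L" using assms(1) by (rule list_all2_lengthD)
  have F: "piece_turn f (L'!i) (L'!j) = piece_turn c (L!i) (L!j)"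
    if "i < length L" "j < length L" for i j
    using piece_turn_affine_reparam assms(1) that by (auto simp: list_all2_conv_all_nth)
  have ne': "L' \<noteq> []" using len assms(2) by auto
  have "piece_turn f (last L') (hd L') = piece_turn c (last L) (hd L)"
    using F[of "length L - 1" 0] assms(2) ne' len by (simp add: last_conv_nth hd_conv_nth)
  moreover have "chain_sum (piece_turn f) L' = chain_sum (piece_turn c) L"
    unfolding chain_sum_conv_sum len by (intro sum.cong refl F) auto
  ultimately show ?thesis by (simp add: cyclic_sum_def)
qed

lemma affine_reparamI:
  assumes "0 < \<beta>" "p < q" "\<forall>y\<in>{(p - \<alpha>) / \<beta>..(q - \<alpha>) / \<beta>}. f y = c (\<alpha> + \<beta> * y)"
  shows "affine_reparam f c ((p - \<alpha>) / \<beta>) ((q - \<alpha>) / \<beta>) p q"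
proof -
  have lt: "(p - \<alpha>) / \<beta> < (q - \<alpha>) / \<beta>" using assms by (simp add: divide_strict_right_mono)
  have r: "(q - p) / ((q - \<alpha>) / \<beta> - (p - \<alpha>) / \<beta>) = \<beta>" using assms by (simp add: field_simps)
  have e: "p + \<beta> * (y - (p - \<alpha>) / \<beta>) = \<alpha> + \<beta> * y" for y using assms by (simp add: field_simps)
  show ?thesis unfolding affine_reparam_def r e using lt assms by auto
qed

lemma regular_chain_affine_reparam:
  fixes zs :: "real list"
  assumes b: "0 < \<beta>" and zs: "regular_chain c zs"
    and fc: "\<forall>y\<in>{(hd zs - \<alpha>) / \<beta>..(last zs - \<alpha>) / \<beta>}. f y = c (\<alpha> + \<beta> * y)"
  defines "h \<equiv> (\<lambda>x. (x - \<alpha>) / \<beta>)"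
  shows "regular_chain f (map h zs)"
    "list_all2 (\<lambda>P' P. affine_reparam f c (fst P') (snd P') (fst P) (snd P)
        \<and> piece_regular c (fst P) (snd P)) (pieces (map h zs)) (pieces zs)"
proof -
  have srt: "sorted_wrt (<) zs" and pr: "\<forall>P\<in>set (pieces zs). piece_regular c (fst P) (snd P)"
    using zs by (auto simp: regular_chain_def)
  have mono: "h x < h y" if "x < y" for x y using that b by (simp add: h_def divide_strict_right_mono)
  have co: "affine_reparam f c (h (fst P)) (h (snd P)) (fst P) (snd P) \<and> piece_regular c (fst P) (snd P)"
    if P: "P \<in> set (pieces zs)" for P
  proof -
    note bounds = pieces_bounds[OF srt P]
    have "h (hd zs) \<le> h (fst P)" "h (snd P) \<le> h (last zs)"
      using bounds b by (auto simp: h_def divide_right_mono)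
    then have "\<forall>y\<in>{h (fst P)..h (snd P)}. f y = c (\<alpha> + \<beta> * y)"
      using fc by (auto simp: h_def)
    then show ?thesis using affine_reparamI[OF b bounds(1)] pr P unfolding h_def by auto
  qed
  show "list_all2 (\<lambda>P' P. affine_reparam f c (fst P') (snd P') (fst P) (snd P)
      \<and> piece_regular c (fst P) (snd P)) (pieces (map h zs)) (pieces zs)"
    unfolding pieces_map list.rel_map list_all2_same using co by auto
  have "sorted_wrt (<) (map h zs)"
    using srt by (auto simp: sorted_wrt_map intro: sorted_wrt_mono_rel mono)
  moreover have "\<forall>P'\<in>set (pieces (map h zs)). piece_regular f (fst P') (snd P')"
    unfolding pieces_map using co affine_reparam_piece(1) by fastforce
  ultimately show "regular_chain f (map h zs)" by (simp add: regular_chain_def)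
qed

lemma right_deriv_affine:
  assumes s: "s < s2" and b: "0 < \<beta>" and fc: "\<forall>y\<in>{s..s2}. f y = C (\<alpha> + \<beta> * y)"
    and D: "(C has_vector_derivative D) (at_right (\<alpha> + \<beta> * s))"
  shows "right_deriv f s = complex_of_real \<beta> * right_deriv C (\<alpha> + \<beta> * s)"
proof -
  have fc': "\<forall>y\<in>{s..s2}. f y = C ((\<alpha> + \<beta> * s) + \<beta> * (y - s))"
    using fc by (simp add: algebra_simps)
  have lt: "\<alpha> + \<beta> * s < (\<alpha> + \<beta> * s) + \<beta> * (s2 - s)" using s b by simp
  have D': "(C has_vector_derivative D)
      (at ((\<alpha> + \<beta> * s) + \<beta> * (s - s)) within {\<alpha> + \<beta> * s..(\<alpha> + \<beta> * s) + \<beta> * (s2 - s)})"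
    using D at_within_Icc_at_right[OF lt] by simp
  have "(f has_vector_derivative (\<beta> *\<^sub>R D)) (at s within {s..s2})"
    by (rule has_vector_derivative_affine_reparam[OF s b fc' _ D']) (use s in auto)
  then have "right_deriv f s = \<beta> *\<^sub>R D"
    using s by (intro right_deriv_eqI) (simp add: at_within_Icc_at_right)
  then show ?thesis using right_deriv_eqI[OF D] by (simp add: scaleR_conv_of_real)
qed

lemma left_deriv_affine:
  assumes s: "s1 < s" and b: "0 < \<beta>" and fc: "\<forall>y\<in>{s1..s}. f y = C (\<alpha> + \<beta> * y)"
    and D: "(C has_vector_derivative D) (at_left (\<alpha> + \<beta> * s))"
  shows "left_deriv f s = complex_of_real \<beta> * left_deriv C (\<alpha> + \<beta> * s)"
proof -
  have fc': "\<forall>y\<in>{s1..s}. f y = C ((\<alpha> + \<beta> * s1) + \<beta> * (y - s1))"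
    using fc by (simp add: algebra_simps)
  have e: "(\<alpha> + \<beta> * s1) + \<beta> * (s - s1) = \<alpha> + \<beta> * s" by (simp add: algebra_simps)
  have lt: "\<alpha> + \<beta> * s1 < \<alpha> + \<beta> * s" using s b by simp
  have D': "(C has_vector_derivative D)
      (at ((\<alpha> + \<beta> * s1) + \<beta> * (s - s1)) within {\<alpha> + \<beta> * s1..(\<alpha> + \<beta> * s1) + \<beta> * (s - s1)})"
    unfolding e using D at_within_Icc_at_left[OF lt] by simp
  have "(f has_vector_derivative (\<beta> *\<^sub>R D)) (at s within {s1..s})"
    by (rule has_vector_derivative_affine_reparam[OF s b fc' _ D']) (use s in auto)
  then have "left_deriv f s = \<beta> *\<^sub>R D"
    using s by (intro left_deriv_eqI) (simp add: at_within_Icc_at_left)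
  then show ?thesis using left_deriv_eqI[OF D] by (simp add: scaleR_conv_of_real)
qed

lemma rot_subpath:
  assumes zs: "regular_chain C zs" "2 \<le> length zs" and a: "hd zs = a" and b: "last zs = b"
  shows "valid_partition (subpath a b C) (map (\<lambda>x. (x - a) / (b - a)) zs)"
    "rot (subpath a b C) = cyclic_sum (piece_turn C) (pieces zs)"
proof -
  note ends = pieces_ends[OF zs(2)]
  have "sorted_wrt (<) zs" using zs(1) by (simp add: regular_chain_def)
  note bounds = pieces_bounds[OF this hd_in_set[OF ends(1)]]
  have ab: "a < b" using bounds(1,3) ends(2) a b by linarith
  have fc: "\<forall>y\<in>{(hd zs - a) / (b - a)..(last zs - a) / (b - a)}. subpath a b C y = C (a + (b - a) * y)"
    by (simp add: subpath_def algebra_simps)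
  have "0 < b - a" using ab by simp
  note R = regular_chain_affine_reparam[OF this zs(1) fc]
  have ne: "zs \<noteq> []" using zs(2) by auto
  show v: "valid_partition (subpath a b C) (map (\<lambda>x. (x - a) / (b - a)) zs)"
    unfolding valid_partition_iff_regular_chain using R(1) ne a b ab zs(2)
    by (simp add: hd_map last_map)
  show "rot (subpath a b C) = cyclic_sum (piece_turn C) (pieces zs)"
    unfolding rot_eq_cyclic_sum[OF v] by (rule cyclic_sum_affine_reparam[OF R(2) ends(1)])
qed

text \<open>Both halves are stated in the shape \<open>C (\<alpha> + \<beta> * y)\<close> that the reparametrisation lemmas
  match against, hence the \<open>0 +\<close>.\<close>

lemma joinpaths_subpaths_first_half:
  assumes "y \<in> {0..1/2}"
  shows "(subpath 0 t C +++ subpath t' 1 C) y = C (0 + (2 * t) * y)"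
  using assms by (simp add: joinpaths_def subpath_def algebra_simps)

lemma joinpaths_subpaths_second_half:
  assumes "C t = C t'" "y \<in> {1/2..1}"
  shows "(subpath 0 t C +++ subpath t' 1 C) y = C ((2 * t' - 1) + (2 * (1 - t')) * y)"
proof (cases "y * 2 \<le> 1")
  case True
  then have "y = 1/2" using assms(2) by simp
  then show ?thesis using assms(1) by (simp add: joinpaths_def subpath_def algebra_simps)
qed (simp add: joinpaths_def subpath_def algebra_simps)

lemma rot_join_subpaths:
  assumes A: "regular_chain C (xs @ [t])" and B: "regular_chain C (t' # ys)"
    and xne: "xs \<noteq> []" and yne: "ys \<noteq> []" and h0: "hd xs = 0" and l1: "last ys = 1"
    and ct: "C t = C t'" and t: "0 < t" "t < t'" "t' < 1"
  defines "I \<equiv> subpath 0 t C +++ subpath t' 1 C"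
  shows "\<exists>qs. valid_partition I qs"
    "rot I = cyclic_sum (piece_turn C) (pieces (xs @ [t]) @ pieces (t' # ys))"
proof -
  define h1 where "h1 = (\<lambda>x::real. (x - 0) / (2 * t))"
  define h2 where "h2 = (\<lambda>x::real. (x - (2 * t' - 1)) / (2 * (1 - t')))"
  have e1: "(hd (xs @ [t]) - 0) / (2 * t) = 0" "(last (xs @ [t]) - 0) / (2 * t) = 1/2"
    using xne h0 t by simp_all
  have e2: "(hd (t' # ys) - (2 * t' - 1)) / (2 * (1 - t')) = 1/2"
      "(last (t' # ys) - (2 * t' - 1)) / (2 * (1 - t')) = 1"
    using yne l1 t by (simp_all add: field_simps)
  have fc1: "\<forall>y\<in>{(hd (xs @ [t]) - 0) / (2 * t)..(last (xs @ [t]) - 0) / (2 * t)}.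
      I y = C (0 + (2 * t) * y)"
    unfolding e1 I_def using joinpaths_subpaths_first_half by blast
  have fc2: "\<forall>y\<in>{(hd (t' # ys) - (2 * t' - 1)) / (2 * (1 - t'))..
      (last (t' # ys) - (2 * t' - 1)) / (2 * (1 - t'))}. I y = C ((2 * t' - 1) + (2 * (1 - t')) * y)"
    unfolding e2 I_def using joinpaths_subpaths_second_half[OF ct] by blast
  have pos: "0 < 2 * t" "0 < 2 * (1 - t')" using t by auto
  note R1 = regular_chain_affine_reparam[OF pos(1) A fc1, folded h1_def]
  note R2 = regular_chain_affine_reparam[OF pos(2) B fc2, folded h2_def]
  have h1t: "h1 t = 1/2" and h2t: "h2 t' = 1/2" and h21: "h2 1 = 1"
    using t by (simp_all add: h1_def h2_def field_simps)
  have m1: "map h1 (xs @ [t]) = map h1 xs @ [1/2]" using h1t by simp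
  have m2: "map h2 (t' # ys) = 1/2 # map h2 ys" using h2t by simp
  define qs where "qs = map h1 xs @ 1/2 # map h2 ys"
  have pq: "pieces qs = pieces (map h1 (xs @ [t])) @ pieces (map h2 (t' # ys))"
    unfolding qs_def m1 m2 by (rule pieces_append)
  have "regular_chain I (map h1 xs @ [1/2])" "regular_chain I (1/2 # map h2 ys)"
    using R1(1) R2(1) unfolding m1 m2 .
  then have "regular_chain I qs"
    unfolding qs_def using regular_chain_append[of I "map h1 xs" "1/2" "map h2 ys"] by blast
  moreover have "hd qs = 0" using xne h0 by (simp add: qs_def hd_map h1_def)
  moreover have "last qs = 1" using yne l1 h21 by (simp add: qs_def last_map)
  moreover have "2 \<le> length qs" using xne by (cases xs) (auto simp: qs_def)
  ultimately have v: "valid_partition I qs" by (simp add: valid_partition_iff_regular_chain)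
  then show "\<exists>qs. valid_partition I qs" ..
  have ne: "pieces (xs @ [t]) @ pieces (t' # ys) \<noteq> []" using yne by (cases ys) auto
  show "rot I = cyclic_sum (piece_turn C) (pieces (xs @ [t]) @ pieces (t' # ys))"
    unfolding rot_eq_cyclic_sum[OF v] pq
    by (rule cyclic_sum_affine_reparam[OF list_all2_appendI[OF R1(2) R2(2)] ne])
qed

lemma rot_indirect_split:
  assumes A: "regular_chain C (xs @ [t])" and B: "regular_chain C (t' # ys)"
    and h: "hd (xs @ [t]) = 0" and l: "last (t' # ys) = 1"
    and xs: "xs = [] \<longleftrightarrow> t = 0" and ys: "ys = [] \<longleftrightarrow> t' = 1"
    and nt: "\<not> (t = 0 \<and> t' = 1)" and tt: "t < t'" and ct: "C t = C t'"
  shows "\<exists>qs. valid_partition (indirect_split C t t') qs"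
    "rot (indirect_split C t t') = cyclic_sum (piece_turn C) (pieces (xs @ [t]) @ pieces (t' # ys))"
proof -
  have "0 \<le> t" "t' \<le> 1"
    using sorted_hd_last[of "xs @ [t]" t] sorted_hd_last[of "t' # ys" t'] A B h l
    by (auto simp: regular_chain_def)
  then consider "t = 0" | "t' = 1" | "0 < t" "t' < 1" using nt by linarith
  then have "(\<exists>qs. valid_partition (indirect_split C t t') qs) \<and>
    rot (indirect_split C t t') = cyclic_sum (piece_turn C) (pieces (xs @ [t]) @ pieces (t' # ys))"
  proof cases
    case 1
    then have "xs = []" "ys \<noteq> []" using xs ys nt by auto
    then have "2 \<le> length (t' # ys)" by (cases ys) auto
    note R = rot_subpath[OF B this refl l]
    show ?thesis using R 1 \<open>xs = []\<close> by (auto simp: indirect_split_def)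
  next
    case 2
    then have "ys = []" "xs \<noteq> []" "t \<noteq> 0" using xs ys nt by auto
    then have "2 \<le> length (xs @ [t])" by (cases xs) auto
    note R = rot_subpath[OF A this h refl]
    show ?thesis using R 2 \<open>ys = []\<close> \<open>t \<noteq> 0\<close> by (auto simp: indirect_split_def)
  next
    case 3
    then have "xs \<noteq> []" "ys \<noteq> []" "hd xs = 0" "last ys = 1" using xs ys h l by auto
    note R = rot_join_subpaths[OF A B this ct 3(1) tt 3(2)]
    show ?thesis using R 3 by (auto simp: indirect_split_def)
  qed
  then show "\<exists>qs. valid_partition (indirect_split C t t') qs"
    "rot (indirect_split C t t') = cyclic_sum (piece_turn C) (pieces (xs @ [t]) @ pieces (t' # ys))"
    by blast+
qed

section \<open>Admissible curves\<close>

text \<open>For a closed curve the tangent arriving at parameter \<open>0\<close> is the one arriving at \<open>1\<close>.\<close>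

definition smooth_at :: "(real \<Rightarrow> complex) \<Rightarrow> real \<Rightarrow> bool" where
  "smooth_at C x \<longleftrightarrow>
     (\<exists>r>0. left_deriv C (if x = 0 then 1 else x) = complex_of_real r * right_deriv C x)"

definition admissible :: "(real \<Rightarrow> complex) \<Rightarrow> bool" where
  "admissible C \<longleftrightarrow> (\<exists>ps. valid_partition C ps) \<and> C 0 = C 1 \<and>
     (\<forall>t1\<in>{0..<1}. \<forall>t2\<in>{0..<1}. \<forall>t3\<in>{0..<1}.
        C t1 = C t2 \<and> C t2 = C t3 \<longrightarrow> t1 = t2 \<or> t2 = t3 \<or> t1 = t3) \<and>
     (\<forall>x\<in>{0..<1}. \<forall>y\<in>{0..<1}. x \<noteq> y \<and> C x = C y \<longrightarrow>
        smooth_at C x \<and> Im (cnj (right_deriv C x) * right_deriv C y) \<noteq> 0)"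

lemma admissibleD:
  assumes "admissible C"
  shows "\<exists>ps. valid_partition C ps" "C 0 = C 1"
    "\<And>t1 t2 t3. t1 \<in> {0..<1} \<Longrightarrow> t2 \<in> {0..<1} \<Longrightarrow> t3 \<in> {0..<1} \<Longrightarrow>
       C t1 = C t2 \<Longrightarrow> C t2 = C t3 \<Longrightarrow> t1 = t2 \<or> t2 = t3 \<or> t1 = t3"
    "\<And>x y. x \<in> {0..<1} \<Longrightarrow> y \<in> {0..<1} \<Longrightarrow> x \<noteq> y \<Longrightarrow> C x = C y \<Longrightarrow> smooth_at C x"
    "\<And>x y. x \<in> {0..<1} \<Longrightarrow> y \<in> {0..<1} \<Longrightarrow> x \<noteq> y \<Longrightarrow> C x = C y \<Longrightarrow>
       Im (cnj (right_deriv C x) * right_deriv C y) \<noteq> 0"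
  using assms unfolding admissible_def by blast+

lemma curve_C_admissible:
  assumes "curve_C \<gamma>"
  shows "admissible \<gamma>"
proof -
  obtain D where D: "\<And>s. s \<in> {0..1} \<Longrightarrow> (\<gamma> has_vector_derivative D s) (at s within {0..1})"
     "\<And>s. s \<in> {0..1} \<Longrightarrow> D s \<noteq> 0" "D 0 = D 1" and "continuous_on {0..1} D"
    using assms unfolding curve_C_def regular_closed_def by blast
  then have "piece_regular \<gamma> 0 1" unfolding piece_regular_def by auto
  then have v: "valid_partition \<gamma> [0, 1]" unfolding valid_partition_def by simp
  have vd: "vector_derivative \<gamma> (at s within {0..1}) = D s" if "s \<in> {0..1}" for s
    using vector_derivative_within_cbox[of 0 1 s \<gamma> "D s"] D(1)[OF that] that by simp
  have R: "right_deriv \<gamma> s = D s" if "0 \<le> s" "s < 1" for s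
    using right_deriv_within_Icc[OF D(1)] that by simp
  have L: "left_deriv \<gamma> s = D s" if "0 < s" "s \<le> 1" for s
    using left_deriv_within_Icc[OF D(1)] that by simp
  have "smooth_at \<gamma> x" if "x \<in> {0..<1}" for x
  proof -
    have "left_deriv \<gamma> (if x = 0 then 1 else x) = complex_of_real 1 * right_deriv \<gamma> x"
      using that R L D(3) by auto
    then show ?thesis unfolding smooth_at_def by (metis zero_less_one)
  qed
  moreover have "Im (cnj (right_deriv \<gamma> x) * right_deriv \<gamma> y) \<noteq> 0"
    if "x \<in> {0..<1}" "y \<in> {0..<1}" "x \<noteq> y" "\<gamma> x = \<gamma> y" for x y
    using assms that R vd unfolding curve_C_def generic_def by auto
  ultimately show ?thesis
    using v assms unfolding admissible_def curve_C_def generic_def regular_closed_def by blast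
qed

lemma positive_multiple_rescale:
  assumes "L = complex_of_real b1 * X" "R = complex_of_real b2 * Y" "X = complex_of_real r * Y"
    "0 < b1" "0 < b2" "0 < r"
  shows "\<exists>r'>0. L = complex_of_real r' * R"
proof (intro exI conjI)
  show "0 < b1 * r / b2" using assms by simp
  show "L = complex_of_real (b1 * r / b2) * R" using assms by (simp add: field_simps)
qed

lemma admissible_reparam:
  assumes C: "admissible C" and v: "\<exists>ps. valid_partition I ps" and e: "I 0 = I 1"
    and sig: "\<And>s. s \<in> {0..<1} \<Longrightarrow> \<sigma> s \<in> {0..<1} \<and> I s = C (\<sigma> s)" and inj: "inj_on \<sigma> {0..<1}"
    and good: "\<And>s s'. s \<in> {0..<1} \<Longrightarrow> s' \<in> {0..<1} \<Longrightarrow> s' \<noteq> s \<Longrightarrow> I s' = I s \<Longrightarrow>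
         (\<exists>\<beta>>0. right_deriv I s = complex_of_real \<beta> * right_deriv C (\<sigma> s))
         \<and> (smooth_at C (\<sigma> s) \<longrightarrow> smooth_at I s)"
  shows "admissible I"
proof -
  note CD = admissibleD[OF C]
  have "t1 = t2 \<or> t2 = t3 \<or> t1 = t3"
    if "t1 \<in> {0..<1}" "t2 \<in> {0..<1}" "t3 \<in> {0..<1}" "I t1 = I t2" "I t2 = I t3" for t1 t2 t3
  proof -
    have "\<sigma> t1 = \<sigma> t2 \<or> \<sigma> t2 = \<sigma> t3 \<or> \<sigma> t1 = \<sigma> t3"
      using CD(3)[of "\<sigma> t1" "\<sigma> t2" "\<sigma> t3"] sig that by auto
    then show ?thesis using inj that by (auto dest: inj_onD)
  qed
  moreover have "smooth_at I x \<and> Im (cnj (right_deriv I x) * right_deriv I y) \<noteq> 0"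
    if xy: "x \<in> {0..<1}" "y \<in> {0..<1}" "x \<noteq> y" "I x = I y" for x y
  proof -
    have ne: "\<sigma> x \<noteq> \<sigma> y" using inj that by (auto dest: inj_onD)
    have sx: "\<sigma> x \<in> {0..<1}" "\<sigma> y \<in> {0..<1}" "C (\<sigma> x) = C (\<sigma> y)" using sig that by metis+
    obtain b1 where b1: "b1 > 0" "right_deriv I x = complex_of_real b1 * right_deriv C (\<sigma> x)"
      and sm: "smooth_at C (\<sigma> x) \<longrightarrow> smooth_at I x"
      using good[OF xy(1,2)] xy(3,4) by metis
    obtain b2 where b2: "b2 > 0" "right_deriv I y = complex_of_real b2 * right_deriv C (\<sigma> y)"
      using good[OF xy(2,1)] xy(3,4) by metis
    have "Im (cnj (right_deriv I x) * right_deriv I y)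
        = b1 * b2 * Im (cnj (right_deriv C (\<sigma> x)) * right_deriv C (\<sigma> y))"
      by (simp add: b1 b2 algebra_simps)
    then show ?thesis using CD(4,5)[OF sx(1,2) ne sx(3)] sm b1 b2 by simp
  qed
  ultimately show ?thesis unfolding admissible_def using v e by blast
qed

text \<open>If \<open>I\<close> passes through a double point of \<open>C\<close> along one branch only, a second visit of
  \<open>I\<close> would make it a triple point of \<open>C\<close>.\<close>

lemma reparam_no_double_point_at_cut:
  assumes C: "admissible C"
    and sig: "\<And>s. s \<in> {0..<1} \<Longrightarrow> \<sigma> s \<in> {0..<1} \<and> I s = C (\<sigma> s)" and inj: "inj_on \<sigma> {0..<1}"
    and s: "s \<in> {0..<1}" and q: "q \<in> {0..<1}" "q \<noteq> \<sigma> s" "C q = C (\<sigma> s)" "q \<notin> \<sigma> ` {0..<1}"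
    and s': "s' \<in> {0..<1}" "s' \<noteq> s" "I s' = I s"
  shows False
proof -
  have "\<sigma> s' \<noteq> \<sigma> s" using inj s s' by (auto dest: inj_onD)
  moreover have "\<sigma> s' \<noteq> q" using q(4) s'(1) by auto
  moreover have "C (\<sigma> s') = C (\<sigma> s)" using sig s s' by metis
  ultimately show False
    using admissibleD(3)[OF C, of "\<sigma> s" q "\<sigma> s'"] sig s s' q by auto
qed

lemma reparam_interior_tangent:
  assumes ps: "valid_partition C ps" and s: "a1 < s" "s < b1" "s \<noteq> 0" and b: "0 < \<beta>"
    and fc: "\<forall>y\<in>{a1..b1}. I y = C (\<alpha> + \<beta> * y)" and \<sigma>: "0 < \<alpha> + \<beta> * s" "\<alpha> + \<beta> * s < 1"
  shows "(\<exists>\<beta>'>0. right_deriv I s = complex_of_real \<beta>' * right_deriv C (\<alpha> + \<beta> * s))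
    \<and> (smooth_at C (\<alpha> + \<beta> * s) \<longrightarrow> smooth_at I s)"
proof -
  have fr: "\<forall>y\<in>{s..b1}. I y = C (\<alpha> + \<beta> * y)" and fl: "\<forall>y\<in>{a1..s}. I y = C (\<alpha> + \<beta> * y)"
    using fc s by auto
  have R: "right_deriv I s = complex_of_real \<beta> * right_deriv C (\<alpha> + \<beta> * s)"
    using valid_partition_has_right_deriv[OF ps] right_deriv_affine[OF s(2) b fr] \<sigma> by fastforce
  have L: "left_deriv I s = complex_of_real \<beta> * left_deriv C (\<alpha> + \<beta> * s)"
    using valid_partition_has_left_deriv[OF ps] left_deriv_affine[OF s(1) b fl] \<sigma> by fastforce
  have "smooth_at I s" if sm: "smooth_at C (\<alpha> + \<beta> * s)"
  proof -
    obtain r where r: "r > 0"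
        "left_deriv C (\<alpha> + \<beta> * s) = complex_of_real r * right_deriv C (\<alpha> + \<beta> * s)"
      using sm \<sigma> unfolding smooth_at_def by auto
    show ?thesis
      using s(3) positive_multiple_rescale[OF L R r(2) b b r(1)] unfolding smooth_at_def by simp
  qed
  then show ?thesis using R b by blast
qed

lemma admissible_subpath_from:
  assumes C: "admissible C" and t: "0 < t'" "t' < 1" and ct: "C 0 = C t'"
    and v: "\<exists>qs. valid_partition (subpath t' 1 C) qs"
  shows "admissible (subpath t' 1 C)"
proof -
  obtain ps where ps: "valid_partition C ps" using admissibleD(1)[OF C] by blast
  define I where "I = subpath t' 1 C"
  define \<sigma> where "\<sigma> s = t' + (1 - t') * s" for s
  have fc: "\<forall>y\<in>{0..1}. I y = C (t' + (1 - t') * y)" by (simp add: I_def subpath_def algebra_simps)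
  have b: "0 < 1 - t'" using t by simp
  have bounds: "t' \<le> \<sigma> s \<and> \<sigma> s < 1" if "s \<in> {0..<1}" for s
  proof -
    have "(1 - t') * s < 1 - t'" "0 \<le> (1 - t') * s"
      using mult_strict_left_mono[of s 1 "1 - t'"] that b by auto
    then show ?thesis unfolding \<sigma>_def by (intro conjI) linarith+
  qed
  have sig: "\<sigma> s \<in> {0..<1} \<and> I s = C (\<sigma> s)" if "s \<in> {0..<1}" for s
  proof
    show "\<sigma> s \<in> {0..<1}" using bounds[OF that] t by auto
    show "I s = C (\<sigma> s)" using that fc by (simp add: \<sigma>_def)
  qed
  have inj: "inj_on \<sigma> {0..<1}" using b by (auto simp: inj_on_def \<sigma>_def)
  have e: "I 0 = I 1" using ct admissibleD(2)[OF C] by (simp add: I_def subpath_def)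
  have good: "(\<exists>\<beta>>0. right_deriv I s = complex_of_real \<beta> * right_deriv C (\<sigma> s))
      \<and> (smooth_at C (\<sigma> s) \<longrightarrow> smooth_at I s)"
    if s: "s \<in> {0..<1}" "s' \<in> {0..<1}" "s' \<noteq> s" "I s' = I s" for s s'
  proof (cases "s = 0")
    case True
    have "\<sigma> u \<noteq> 0" if "u \<in> {0..<1}" for u using bounds[OF that] t by linarith
    then have "0 \<notin> \<sigma> ` {0..<1}" by (metis imageE)
    then show ?thesis
      using reparam_no_double_point_at_cut[OF C sig inj s(1), of 0 s'] True ct s t by (auto simp: \<sigma>_def)
  next
    case False
    then have "0 < s" "s < 1" using s by auto
    moreover have "0 < t' + (1 - t') * s" "t' + (1 - t') * s < 1"
      using bounds[OF s(1)] t unfolding \<sigma>_def by linarith+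
    ultimately show ?thesis
      unfolding \<sigma>_def by (intro reparam_interior_tangent[OF ps _ _ False b fc])
  qed
  have "\<exists>ps. valid_partition I ps" using v by (simp add: I_def)
  from admissible_reparam[OF C this e sig inj good] show ?thesis by (simp add: I_def)
qed

lemma admissible_subpath_to:
  assumes C: "admissible C" and t: "0 < t" "t < 1" and ct: "C 0 = C t"
    and v: "\<exists>qs. valid_partition (subpath 0 t C) qs"
  shows "admissible (subpath 0 t C)"
proof -
  obtain ps where ps: "valid_partition C ps" using admissibleD(1)[OF C] by blast
  define I where "I = subpath 0 t C"
  define \<sigma> where "\<sigma> s = 0 + t * s" for s
  have fc: "\<forall>y\<in>{0..1}. I y = C (0 + t * y)" by (simp add: I_def subpath_def algebra_simps)
  have bounds: "0 \<le> \<sigma> s \<and> \<sigma> s < t" if "s \<in> {0..<1}" for s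
  proof -
    have "t * s < t * 1" using that t by (intro mult_strict_left_mono) auto
    then show ?thesis using that t by (simp add: \<sigma>_def)
  qed
  have sig: "\<sigma> s \<in> {0..<1} \<and> I s = C (\<sigma> s)" if "s \<in> {0..<1}" for s
  proof
    show "\<sigma> s \<in> {0..<1}" using bounds[OF that] t by auto
    show "I s = C (\<sigma> s)" using that fc by (simp add: \<sigma>_def)
  qed
  have inj: "inj_on \<sigma> {0..<1}" using t by (auto simp: inj_on_def \<sigma>_def)
  have e: "I 0 = I 1" using ct by (simp add: I_def subpath_def)
  have good: "(\<exists>\<beta>>0. right_deriv I s = complex_of_real \<beta> * right_deriv C (\<sigma> s))
      \<and> (smooth_at C (\<sigma> s) \<longrightarrow> smooth_at I s)"
    if s: "s \<in> {0..<1}" "s' \<in> {0..<1}" "s' \<noteq> s" "I s' = I s" for s s'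
  proof (cases "s = 0")
    case True
    have "\<sigma> u \<noteq> t" if "u \<in> {0..<1}" for u using bounds[OF that] by linarith
    then have "t \<notin> \<sigma> ` {0..<1}" by (metis imageE)
    then show ?thesis
      using reparam_no_double_point_at_cut[OF C sig inj s(1), of t s'] True ct s t by (auto simp: \<sigma>_def)
  next
    case False
    then have "0 < s" "s < 1" using s by auto
    moreover have "0 < 0 + t * s" using t calculation by simp
    moreover have "0 + t * s < 1" using bounds[OF s(1)] t unfolding \<sigma>_def by linarith
    ultimately show ?thesis
      unfolding \<sigma>_def by (intro reparam_interior_tangent[OF ps _ _ False t(1) fc])
  qed
  have "\<exists>ps. valid_partition I ps" using v by (simp add: I_def)
  from admissible_reparam[OF C this e sig inj good] show ?thesis by (simp add: I_def)
qed

definition join_param :: "real \<Rightarrow> real \<Rightarrow> real \<Rightarrow> real" where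
  "join_param t t' s = (if s * 2 \<le> 1 then 2 * t * s else (2 * t' - 1) + (2 * (1 - t')) * s)"

lemma join_param_bounds:
  assumes t: "0 < t" "t < t'" "t' < 1" and s: "s \<in> {0..<1}"
  shows "s * 2 \<le> 1 \<Longrightarrow> 0 \<le> join_param t t' s \<and> join_param t t' s \<le> t"
    and "\<not> s * 2 \<le> 1 \<Longrightarrow> t' < join_param t t' s \<and> join_param t t' s < 1"
proof -
  assume "s * 2 \<le> 1"
  moreover have "(2 * t) * s \<le> (2 * t) * (1/2)" using calculation t by (intro mult_left_mono) auto
  ultimately show "0 \<le> join_param t t' s \<and> join_param t t' s \<le> t"
    using s t by (simp add: join_param_def)
next
  assume "\<not> s * 2 \<le> 1"
  moreover have "(2 * (1 - t')) * (1/2) < (2 * (1 - t')) * s" "(2 * (1 - t')) * s < (2 * (1 - t')) * 1"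
    using calculation s t by (auto intro!: mult_strict_left_mono)
  ultimately show "t' < join_param t t' s \<and> join_param t t' s < 1"
    using t by (simp add: join_param_def algebra_simps)
qed

lemma inj_on_join_param:
  assumes t: "0 < t" "t < t'" "t' < 1"
  shows "inj_on (join_param t t') {0..<1}"
proof (rule inj_onI)
  fix x y assume x: "x \<in> {0..<1}" and y: "y \<in> {0..<1}" and e: "join_param t t' x = join_param t t' y"
  note bx = join_param_bounds[OF t x] and "by" = join_param_bounds[OF t y]
  show "x = y"
  proof (cases "x * 2 \<le> 1"; cases "y * 2 \<le> 1")
    assume "x * 2 \<le> 1" "y * 2 \<le> 1" then show ?thesis using e t by (simp add: join_param_def)
  next
    assume "\<not> x * 2 \<le> 1" "\<not> y * 2 \<le> 1" then show ?thesis using e t by (simp add: join_param_def)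
  qed (use bx "by" e t in force)+
qed

lemma joinpaths_subpaths_eq_join_param:
  assumes "C t = C t'" "s \<in> {0..1}"
  shows "(subpath 0 t C +++ subpath t' 1 C) s = C (join_param t t' s)"
  using joinpaths_subpaths_first_half[of s t C t'] joinpaths_subpaths_second_half[OF assms(1), of s]
    assms(2)
  by (auto simp: join_param_def)

lemma admissible_join_subpaths:
  assumes C: "admissible C" and t: "0 < t" "t < t'" "t' < 1" and ct: "C t = C t'"
    and v: "\<exists>qs. valid_partition (subpath 0 t C +++ subpath t' 1 C) qs"
  shows "admissible (subpath 0 t C +++ subpath t' 1 C)"
proof -
  obtain ps where ps: "valid_partition C ps" using admissibleD(1)[OF C] by blast
  define I where "I = subpath 0 t C +++ subpath t' 1 C"
  define \<sigma> where "\<sigma> = join_param t t'"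
  note bounds = join_param_bounds[OF t, folded \<sigma>_def]
  have fcA: "\<forall>y\<in>{0..1/2}. I y = C (0 + (2 * t) * y)"
    using joinpaths_subpaths_first_half unfolding I_def by blast
  have fcB: "\<forall>y\<in>{1/2..1}. I y = C ((2 * t' - 1) + (2 * (1 - t')) * y)"
    using joinpaths_subpaths_second_half[OF ct] unfolding I_def by blast
  have sig: "\<sigma> s \<in> {0..<1} \<and> I s = C (\<sigma> s)" if "s \<in> {0..<1}" for s
    using bounds[OF that] joinpaths_subpaths_eq_join_param[OF ct, of s] that t
    by (cases "s * 2 \<le> 1") (auto simp: I_def \<sigma>_def)
  have inj: "inj_on \<sigma> {0..<1}" unfolding \<sigma>_def by (rule inj_on_join_param[OF t])
  have e: "I 0 = I 1" using admissibleD(2)[OF C] by (simp add: I_def joinpaths_def subpath_def)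
  have good: "(\<exists>\<beta>>0. right_deriv I s = complex_of_real \<beta> * right_deriv C (\<sigma> s))
      \<and> (smooth_at C (\<sigma> s) \<longrightarrow> smooth_at I s)"
    if s: "s \<in> {0..<1}" "s' \<in> {0..<1}" "s' \<noteq> s" "I s' = I s" for s s'
  proof -
    consider "s = 0" | "0 < s" "s * 2 < 1" | "s * 2 = 1" | "1 < s * 2" using s(1) by fastforce
    then show ?thesis
    proof cases
      case 1
      obtain D0 where D0: "(C has_vector_derivative D0) (at_right (0 + (2 * t) * 0))"
        using valid_partition_has_right_deriv[OF ps, of 0] by auto
      obtain D1 where D1: "(C has_vector_derivative D1) (at_left ((2 * t' - 1) + (2 * (1 - t')) * 1))"
        using valid_partition_has_left_deriv[OF ps, of 1] by (auto simp: algebra_simps)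
      have R: "right_deriv I 0 = complex_of_real (2 * t) * right_deriv C 0"
        using right_deriv_affine[of 0 "1/2" "2 * t" I C 0 D0] t fcA D0 by simp
      have L: "left_deriv I 1 = complex_of_real (2 * (1 - t')) * left_deriv C 1"
        using left_deriv_affine[of "1/2" 1 "2 * (1 - t')" I C "2 * t' - 1" D1] t fcB D1
        by (simp add: algebra_simps)
      have "smooth_at I 0" if sm: "smooth_at C 0"
      proof -
        obtain r where r: "r > 0" "left_deriv C 1 = complex_of_real r * right_deriv C 0"
          using sm unfolding smooth_at_def by auto
        show ?thesis
          using positive_multiple_rescale[OF L R r(2)] t r(1) unfolding smooth_at_def by simp
      qed
      moreover have "\<sigma> s = 0" using 1 by (simp add: \<sigma>_def join_param_def)
      moreover have "\<exists>\<beta>>0. right_deriv I 0 = complex_of_real \<beta> * right_deriv C 0"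
        using R t by (intro exI[of _ "2 * t"]) simp
      ultimately show ?thesis using 1 by simp
    next
      case 2
      then have \<sigma>s: "\<sigma> s = 0 + (2 * t) * s" by (simp add: \<sigma>_def join_param_def)
      have "\<sigma> s \<le> t" using bounds(1)[OF s(1)] 2 by simp
      then have "0 + (2 * t) * s < 1" using t unfolding \<sigma>s by linarith
      moreover have "0 < 0 + (2 * t) * s" using 2 t by simp
      moreover have "0 < s" "s < 1/2" "s \<noteq> 0" "0 < 2 * t" using 2 t by auto
      ultimately show ?thesis
        unfolding \<sigma>s using reparam_interior_tangent[OF ps _ _ _ _ fcA] by blast
    next
      case 3
      have "\<sigma> u \<noteq> t'" if "u \<in> {0..<1}" for u
        using bounds[OF that] t by (cases "u * 2 \<le> 1") auto
      then have "t' \<notin> \<sigma> ` {0..<1}" by (metis imageE)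
      moreover have "\<sigma> s = t" using 3 by (simp add: \<sigma>_def join_param_def)
      ultimately show ?thesis
        using reparam_no_double_point_at_cut[OF C sig inj s(1), of t' s'] ct s t by auto
    next
      case 4
      then have \<sigma>s: "\<sigma> s = (2 * t' - 1) + (2 * (1 - t')) * s" by (simp add: \<sigma>_def join_param_def)
      have "t' < \<sigma> s \<and> \<sigma> s < 1" using bounds(2)[OF s(1)] 4 by simp
      then have "0 < (2 * t' - 1) + (2 * (1 - t')) * s" "(2 * t' - 1) + (2 * (1 - t')) * s < 1"
        using t unfolding \<sigma>s by auto
      moreover have "1/2 < s" "s < 1" "s \<noteq> 0" "0 < 2 * (1 - t')" using 4 s(1) t by auto
      ultimately show ?thesis
        unfolding \<sigma>s using reparam_interior_tangent[OF ps _ _ _ _ fcB] by blast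
    qed
  qed
  have "\<exists>ps. valid_partition I ps" using v by (simp add: I_def)
  from admissible_reparam[OF C this e sig inj good] show ?thesis by (simp add: I_def)
qed

lemma admissible_indirect_split:
  assumes C: "admissible C" and si: "self_int C t t'"
    and v: "\<exists>qs. valid_partition (indirect_split C t t') qs"
  shows "admissible (indirect_split C t t')"
proof -
  have t: "0 \<le> t" "t < t'" "t' \<le> 1" "C t = C t'" "\<not> (t = 0 \<and> t' = 1)"
    using si by (auto simp: self_int_def)
  consider "t = 0" | "t' = 1" | "0 < t" "t' < 1" using t by linarith
  then show ?thesis
  proof cases
    case 1
    then show ?thesis
      using admissible_subpath_from[OF C, of t'] t v by (auto simp: indirect_split_def)
  next
    case 2
    then have "C 0 = C t" using t admissibleD(2)[OF C] by simp
    then show ?thesis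
      using admissible_subpath_to[OF C, of t] 2 t v by (auto simp: indirect_split_def)
  next
    case 3
    then show ?thesis
      using admissible_join_subpaths[OF C 3(1) t(2) 3(2) t(4)] v by (auto simp: indirect_split_def)
  qed
qed

section \<open>Splitting at a self-intersection\<close>

lemma Arg_div_exchange:
  assumes tr: "Im (cnj a * c) \<noteq> 0" and b: "b = complex_of_real r * a"
    and d: "d = complex_of_real s * c" and r: "0 < r" and s: "0 < s"
  shows "Arg (a / b) + Arg (c / d) = Arg (a / d) + Arg (c / b)"
proof -
  have a0: "a \<noteq> 0" and c0: "c \<noteq> 0" using tr by auto
  have "a / b = complex_of_real (1 / r)" using a0 r b by (simp add: field_simps)
  then have 1: "Arg (a / b) = 0" using r by (simp add: Arg_of_real)
  have "c / d = complex_of_real (1 / s)" using c0 s d by (simp add: field_simps)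
  then have 2: "Arg (c / d) = 0" using s by (simp add: Arg_of_real)
  have "a / d = complex_of_real (1 / s) * (a / c)" using d by (simp add: field_simps)
  then have 3: "Arg (a / d) = Arg (a / c)"
    using s by (subst \<open>a / d = _\<close>) (rule Arg_times_of_real, simp)
  have "c / b = complex_of_real (1 / r) * inverse (a / c)" using b by (simp add: field_simps)
  then have 4: "Arg (c / b) = Arg (inverse (a / c))"
    using r by (subst \<open>c / b = _\<close>) (rule Arg_times_of_real, simp)
  have "a / c \<notin> \<real>"
  proof
    assume "a / c \<in> \<real>"
    then obtain x where "a / c = complex_of_real x" by (auto elim: Reals_cases)
    then have "a = complex_of_real x * c" using c0 by (simp add: field_simps)
    then have "Im (cnj a * c) = x * (Re c * Im c - Im c * Re c)" by (simp add: algebra_simps)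
    then show False using tr by simp
  qed
  then have "Arg (inverse (a / c)) = - Arg (a / c)" by (simp only: Arg_inverse if_False)
  then show ?thesis using 1 2 3 4 by linarith
qed

lemma cyclic_sum_piece_turn_cut:
  assumes "L \<noteq> []" "M \<noteq> []"
    and "\<exists>r>0. left_deriv C (snd (last M)) = complex_of_real r * right_deriv C (fst (hd L))"
    and "\<exists>r>0. left_deriv C (snd (last L)) = complex_of_real r * right_deriv C (fst (hd M))"
    and tr: "Im (cnj (right_deriv C (fst (hd L))) * right_deriv C (fst (hd M))) \<noteq> 0"
  shows "cyclic_sum (piece_turn C) (L @ M) = cyclic_sum (piece_turn C) L + cyclic_sum (piece_turn C) M"
proof -
  obtain r r' where r: "0 < r" "left_deriv C (snd (last M)) = complex_of_real r * right_deriv C (fst (hd L))"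
    and r': "0 < r'" "left_deriv C (snd (last L)) = complex_of_real r' * right_deriv C (fst (hd M))"
    using assms(3,4) by blast
  define A where "A P Q = Arg (right_deriv C (fst Q) / left_deriv C (snd P))"
    for P Q :: "real \<times> real"
  have "A (last M) (hd L) + A (last L) (hd M) = A (last L) (hd L) + A (last M) (hd M)"
    unfolding A_def by (rule Arg_div_exchange[OF tr r(2) r'(2) r(1) r'(1)])
  then have "A (last M) (hd L) / (2 * pi) + A (last L) (hd M) / (2 * pi)
      = A (last L) (hd L) / (2 * pi) + A (last M) (hd M) / (2 * pi)"
    by (simp add: add_divide_distrib[symmetric])
  then have "piece_turn C (last L) (hd M) + piece_turn C (last M) (hd L)
      - piece_turn C (last L) (hd L) - piece_turn C (last M) (hd M) = 0"
    unfolding piece_turn_def A_def[symmetric] by linarith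
  then show ?thesis using cyclic_sum_append[OF assms(1,2)] by simp
qed

lemma valid_partition_through:
  assumes v: "valid_partition C ps0" and t: "0 \<le> t" "t < t'" "t' \<le> 1"
  obtains xs ms ys where "valid_partition C (xs @ t # ms @ t' # ys)"
    "xs = [] \<longleftrightarrow> t = 0" "ys = [] \<longleftrightarrow> t' = 1"
proof -
  obtain ps where ps: "valid_partition C ps" "set ps = set ps0 \<union> ({t, t'} \<inter> {0<..<1})"
    using valid_partition_refine[OF v, of "{t, t'} \<inter> {0<..<1}"] by auto
  have V: "hd ps = 0" "last ps = 1" "sorted_wrt (<) ps"
    using ps(1) unfolding valid_partition_def by auto
  have "t \<in> set ps" "t' \<in> set ps"
    using ps(2) valid_partition_set(2,3)[OF v] t by (auto simp: less_le)
  obtain xs zs where xs: "ps = xs @ t # zs" using \<open>t \<in> set ps\<close> by (meson split_list)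
  have "t' \<notin> set xs" using V(3) t(2) xs by (auto simp: sorted_wrt_append)
  then have "t' \<in> set zs" using \<open>t' \<in> set ps\<close> t(2) xs by auto
  then obtain ms ys where zs: "zs = ms @ t' # ys" by (meson split_list)
  have srt: "sorted_wrt (<) (xs @ t # ms @ t' # ys)" using V(3) xs zs by simp
  have "xs = [] \<longleftrightarrow> t = 0"
  proof
    assume "t = 0"
    show "xs = []"
    proof (rule ccontr)
      assume ne: "xs \<noteq> []"
      then have "hd xs < t" using srt hd_in_set[OF ne] by (auto simp: sorted_wrt_append)
      then show False using V(1) xs ne \<open>t = 0\<close> by simp
    qed
  qed (use V(1) xs in simp)
  moreover have "ys = [] \<longleftrightarrow> t' = 1"
  proof
    assume "t' = 1"
    show "ys = []"
    proof (rule ccontr)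
      assume ne: "ys \<noteq> []"
      then have "t' < last ys" using srt last_in_set[OF ne] by (auto simp: sorted_wrt_append)
      then show False using V(2) xs zs ne \<open>t' = 1\<close> by simp
    qed
  qed (use V(2) xs zs in simp)
  moreover have "valid_partition C (xs @ t # ms @ t' # ys)" using ps(1) xs zs by simp
  ultimately show ?thesis using that by blast
qed

lemma admissible_self_int_tangents:
  assumes C: "admissible C" and si: "self_int C t t'"
  defines "u \<equiv> if t' = 1 then 0 else t'"
  shows "\<exists>r>0. left_deriv C (if t = 0 then 1 else t) = complex_of_real r * right_deriv C t"
    "\<exists>r>0. left_deriv C t' = complex_of_real r * right_deriv C u"
    "Im (cnj (right_deriv C t) * right_deriv C u) \<noteq> 0"
proof -
  have t: "0 \<le> t" "t < t'" "t' \<le> 1" "C t = C t'" "\<not> (t = 0 \<and> t' = 1)"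
    using si unfolding self_int_def by auto
  have u: "t \<in> {0..<1}" "u \<in> {0..<1}" "t \<noteq> u" "C t = C u" "(if u = 0 then 1 else u) = t'"
    using t admissibleD(2)[OF C] by (auto simp: u_def)
  show "\<exists>r>0. left_deriv C (if t = 0 then 1 else t) = complex_of_real r * right_deriv C t"
    using admissibleD(4)[OF C u(1-4)] unfolding smooth_at_def .
  show "\<exists>r>0. left_deriv C t' = complex_of_real r * right_deriv C u"
    using admissibleD(4)[OF C u(2,1) u(3,4)[symmetric]] u(5) unfolding smooth_at_def by simp
  show "Im (cnj (right_deriv C t) * right_deriv C u) \<noteq> 0"
    using admissibleD(5)[OF C u(1-4)] .
qed

lemma rot_split:
  assumes C: "admissible C" and si: "self_int C t t'"
  shows "rot C = rot (direct_split C t t') + rot (indirect_split C t t')"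
    "\<exists>qs. valid_partition (indirect_split C t t') qs"
proof -
  have t: "0 \<le> t" "t < t'" "t' \<le> 1" and ct: "C t = C t'" and nt: "\<not> (t = 0 \<and> t' = 1)"
    using si unfolding self_int_def by auto
  obtain xs ms ys where ps: "valid_partition C (xs @ t # ms @ t' # ys)"
      and xs: "xs = [] \<longleftrightarrow> t = 0" and ys: "ys = [] \<longleftrightarrow> t' = 1"
    using valid_partition_through[OF _ t] admissibleD(1)[OF C] by metis
  have chain: "regular_chain C (xs @ t # ms @ t' # ys)"
    and hd0: "hd (xs @ t # ms @ t' # ys) = 0" and last1: "last (xs @ t # ms @ t' # ys) = 1"
    using ps unfolding valid_partition_iff_regular_chain by auto
  have A: "regular_chain C (xs @ [t])" and "regular_chain C (t # ms @ t' # ys)"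
    using chain regular_chain_append[of C xs t "ms @ t' # ys"] by auto
  then have B: "regular_chain C (t # ms @ [t'])" and Cc: "regular_chain C (t' # ys)"
    using regular_chain_append[of C "t # ms" t' ys] by auto
  have hA: "hd (xs @ [t]) = 0" using hd0 by (cases xs) auto
  have lC: "last (t' # ys) = 1" using last1 by (cases ys) auto
  define LA LB LC where "LA = pieces (xs @ [t])" "LB = pieces (t # ms @ [t'])" "LC = pieces (t' # ys)"
  have "pieces (xs @ t # ms @ t' # ys) = LA @ LB @ LC"
    using pieces_append[of xs t "ms @ t' # ys"] pieces_append[of "t # ms" t' ys]
    by (simp add: LA_LB_LC_def)
  then have "rot C = cyclic_sum (piece_turn C) (LB @ LC @ LA)"
    using rot_eq_cyclic_sum[OF ps] cyclic_sum_rotate[of _ LA "LB @ LC"] by simp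
  also have "\<dots> = cyclic_sum (piece_turn C) LB + cyclic_sum (piece_turn C) (LC @ LA)"
  proof (rule cyclic_sum_piece_turn_cut)
    have "2 \<le> length (t # ms @ [t'])" by simp
    note LB_ends = pieces_ends[OF this, folded LA_LB_LC_def(2)]
    note M_ends = pieces_wrap_ends[OF xs ys nt hA lC, folded LA_LB_LC_def]
    note tangents = admissible_self_int_tangents[OF C si]
    show "LB \<noteq> []" "LC @ LA \<noteq> []" using LB_ends(1) M_ends(1) .
    show "\<exists>r>0. left_deriv C (snd (last (LC @ LA))) = complex_of_real r * right_deriv C (fst (hd LB))"
      "\<exists>r>0. left_deriv C (snd (last LB)) = complex_of_real r * right_deriv C (fst (hd (LC @ LA)))"
      "Im (cnj (right_deriv C (fst (hd LB))) * right_deriv C (fst (hd (LC @ LA)))) \<noteq> 0"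
      using tangents LB_ends(2,3) M_ends(2,3) by simp_all
  qed
  also have "\<dots> = rot (direct_split C t t') + rot (indirect_split C t t')"
  proof -
    have "rot (direct_split C t t') = cyclic_sum (piece_turn C) LB"
      unfolding direct_split_def LA_LB_LC_def by (rule rot_subpath(2)[OF B]) simp_all
    moreover have "rot (indirect_split C t t') = cyclic_sum (piece_turn C) (LC @ LA)"
      using rot_indirect_split(2)[OF A Cc hA lC xs ys nt t(2) ct] cyclic_sum_rotate[of _ LA LC]
      by (simp add: LA_LB_LC_def)
    ultimately show ?thesis by simp
  qed
  finally show "rot C = rot (direct_split C t t') + rot (indirect_split C t t')" .
  show "\<exists>qs. valid_partition (indirect_split C t t') qs"
    by (rule rot_indirect_split(1)[OF A Cc hA lC xs ys nt t(2) ct])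
qed

lemma rot_eq_sum_dsd: "dsd C \<Omega> \<Longrightarrow> admissible C \<Longrightarrow> rot C = (\<Sum>D\<leftarrow>\<Omega>. rot D)"
proof (induction rule: dsd.induct)
  case (step C t t' \<Omega>)
  then have "admissible (indirect_split C t t')"
    using admissible_indirect_split rot_split(2) by blast
  then show ?case using rot_split(1)[OF step.prems step.hyps(1)] step.IH by simp
qed simp

theorem lemma5:
  fixes \<gamma> :: "real \<Rightarrow> complex" and \<Omega> :: "(real \<Rightarrow> complex) list"
  assumes "curve_C \<gamma>" and "dsd \<gamma> \<Omega>"
  shows "rot \<gamma> = (\<Sum>C\<leftarrow>\<Omega>. rot C)"
  using rot_eq_sum_dsd[OF assms(2) curve_C_admissible[OF assms(1)]] .

end
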